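(* (1) The map $\lambda\mapsto L(\lambda)$ induces a bijection between $X(\infty)$ and the set of isomorphism classes of irreducible $\mathbf U(\infty)$-modules in the category $\mathcal C^{hi}$. (2) The map $\lambda\mapsto L(\lambda)$ induces a bijection between $X(\infty)$ and the set of isomorphism classes of irreducible $\mathbf U(\infty)$-modules in the category $\mathcal O$.
   Context: $v$ indeterminate. $\mathbf U(\infty)$ is the $\mathbb Q(v)$-algebra with generators $E_i,F_i,K_i,K_i^{-1}$ ($i\in\mathbb Z$) and relations: $K_iK_j=K_jK_i$, $K_iK_i^{-1}=1$; $K_iE_j=v^{\delta_{i,j}-\delta_{i,j+1}}E_jK_i$; $K_iF_j=v^{\delta_{i,j+1}-\delta_{i,j}}F_jK_i$; $E_iE_j=E_jE_i$, $F_iF_j=F_jF_i$ if $|i-j|>1$; $E_iF_j-F_jE_i=\delta_{i,j}\frac{\widetilde K_i-\widetilde K_i^{-1}}{v-v^{-1}}$, $\widetilde K_i=K_iK_{i+1}^{-1}$; $E_i^2E_j-(v+v^{-1})E_iE_jE_i+E_jE_i^2=0$ and likewise for $F$ if $|i-j|=1$. $X(\infty)$ is the set of all integer sequences $\lambda=(\lambda_i)_{i\in\mathbb Z}$ (no finiteness condition). $\alpha_i=\varepsilon_i-\varepsilon_{i+1}$ ($\varepsilon_i$ unit sequence); $\mu\le_{wt}\lambda$ iff $\lambda-\mu$ is a finite $\mathbb N$-linear combination of the $\alpha_i$; $(-\infty,\lambda]=\{\mu:\mu\le_{wt}\lambda\}$. For a $\mathbf U(\infty)$-module $M$ and $\lambda\in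 X(\infty)$, $M_\lambda=\{x:K_ix=v^{\lambda_i}x\ \forall i\}$, $\mathrm{wt}(M)=\{\lambda:M_\lambda\ne0\}$; $M$ is a weight module if $M=\bigoplus_\lambda M_\lambda$. $\mathcal C^{hi}$ is the full subcategory of weight modules $M$ such that for each $x\in M$ there is $n_0$ with $ux=0$ for every monomial $u$ in the $E_i$'s with at least $n_0$ factors. $\mathcal O$ is the full subcategory of weight modules with finite-dimensional weight spaces for which there are finitely many $\lambda^{(1)},\dots,\lambda^{(s)}\in X(\infty)$ with $\mathrm{wt}(M)\subseteq\bigcup_k(-\infty,\lambda^{(k)}]$. For $\lambda\in X(\infty)$, the Verma module is $M(\lambda)=\mathbf U(\infty)/(\sum_i\mathbf U(\infty)E_i+\sum_i\mathbf U(\infty)(K_i-v^{\lambda_i}))$; it has a unique maximal submodule, and $L(\lambda)$ denotes its unique irreducible quotient. *)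

theory Defs
  imports "HOL-Computational_Algebra.Fraction_Field" "HOL-Computational_Algebra.Polynomial"
          "HOL-Library.Function_Algebras"
begin

type_synonym qv = "rat poly fract"

definition vq :: qv where "vq = Fraction_Field.Fract [:0, 1:] 1"

text \<open>A (candidate) U(infinity)-module on the type 'b: the carrier is a subset of 'b,
  addition is that of the type, scalar multiplication by Q(v) is smult, and
  E i, F i, K i, K i^{-1} act by opE i, opF i, opK i, opKi i.\<close>
record 'b umod =
  carr  :: "'b set"
  smult :: "qv \<Rightarrow> 'b \<Rightarrow> 'b"
  opE   :: "int \<Rightarrow> 'b \<Rightarrow> 'b"
  opF   :: "int \<Rightarrow> 'b \<Rightarrow> 'b"
  opK   :: "int \<Rightarrow> 'b \<Rightarrow> 'b"
  opKi  :: "int \<Rightarrow> 'b \<Rightarrow> 'b"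

definition lin_on :: "'b::ab_group_add umod \<Rightarrow> ('b \<Rightarrow> 'b) \<Rightarrow> bool" where
  "lin_on M f \<longleftrightarrow> (\<forall>x\<in>carr M. f x \<in> carr M) \<and>
     (\<forall>x\<in>carr M. \<forall>y\<in>carr M. f (x + y) = f x + f y) \<and>
     (\<forall>c. \<forall>x\<in>carr M. f (smult M c x) = smult M c (f x))"

definition dlt :: "int \<Rightarrow> int \<Rightarrow> int" where "dlt i j = (if i = j then 1 else 0)"

definition is_Umod :: "'b::ab_group_add umod \<Rightarrow> bool" where
  "is_Umod M \<longleftrightarrow>
     vector_space (smult M) \<and> module.subspace (smult M) (carr M) \<and>
     (\<forall>i. lin_on M (opE M i) \<and> lin_on M (opF M i) \<and> lin_on M (opK M i) \<and> lin_on M (opKi M i)) \<and>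
     (\<forall>x\<in>carr M. \<forall>i j.
        opK M i (opK M j x) = opK M j (opK M i x) \<and>
        opK M i (opKi M i x) = x \<and> opKi M i (opK M i x) = x \<and>
        opK M i (opE M j x) = smult M (vq powi (dlt i j - dlt i (j + 1))) (opE M j (opK M i x)) \<and>
        opK M i (opF M j x) = smult M (vq powi (dlt i (j + 1) - dlt i j)) (opF M j (opK M i x)) \<and>
        (\<bar>i - j\<bar> > 1 \<longrightarrow> opE M i (opE M j x) = opE M j (opE M i x) \<and>
                             opF M i (opF M j x) = opF M j (opF M i x)) \<and>
        opE M i (opF M j x) - opF M j (opE M i x) =
          (if i = j then smult M (inverse (vq - inverse vq))
                (opK M i (opKi M (i + 1) x) - opK M (i + 1) (opKi M i x))
           else 0) \<and>
        (\<bar>i - j\<bar> = 1 \<longrightarrow>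
           opE M i (opE M i (opE M j x)) - smult M (vq + inverse vq) (opE M i (opE M j (opE M i x)))
             + opE M j (opE M i (opE M i x)) = 0 \<and>
           opF M i (opF M i (opF M j x)) - smult M (vq + inverse vq) (opF M i (opF M j (opF M i x)))
             + opF M j (opF M i (opF M i x)) = 0))"

definition is_submod :: "'b::ab_group_add umod \<Rightarrow> 'b set \<Rightarrow> bool" where
  "is_submod M W \<longleftrightarrow> W \<subseteq> carr M \<and> module.subspace (smult M) W \<and>
     (\<forall>i. \<forall>x\<in>W. opE M i x \<in> W \<and> opF M i x \<in> W \<and> opK M i x \<in> W \<and> opKi M i x \<in> W)"

definition irreducible_mod :: "'b::ab_group_add umod \<Rightarrow> bool" where
  "irreducible_mod M \<longleftrightarrow> is_Umod M \<and> carr M \<noteq> {0} \<and>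
     (\<forall>W. is_submod M W \<longrightarrow> W = {0} \<or> W = carr M)"

definition mod_iso :: "'b::ab_group_add umod \<Rightarrow> 'c::ab_group_add umod \<Rightarrow> bool" where
  "mod_iso M N \<longleftrightarrow> (\<exists>\<phi>. bij_betw \<phi> (carr M) (carr N) \<and>
     (\<forall>x\<in>carr M. \<forall>y\<in>carr M. \<phi> (x + y) = \<phi> x + \<phi> y) \<and>
     (\<forall>c. \<forall>x\<in>carr M. \<phi> (smult M c x) = smult N c (\<phi> x)) \<and>
     (\<forall>i. \<forall>x\<in>carr M. \<phi> (opE M i x) = opE N i (\<phi> x) \<and> \<phi> (opF M i x) = opF N i (\<phi> x) \<and>
                     \<phi> (opK M i x) = opK N i (\<phi> x) \<and> \<phi> (opKi M i x) = opKi N i (\<phi> x)))"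

text \<open>X(infinity): all integer sequences indexed by Z.\<close>
type_synonym wt = "int \<Rightarrow> int"

definition wspace :: "'b::ab_group_add umod \<Rightarrow> wt \<Rightarrow> 'b set" where
  "wspace M la = {x \<in> carr M. \<forall>i. opK M i x = smult M (vq powi la i) x}"

definition wts :: "'b::ab_group_add umod \<Rightarrow> wt set" where
  "wts M = {la. wspace M la \<noteq> {0}}"

definition weight_module :: "'b::ab_group_add umod \<Rightarrow> bool" where
  "weight_module M \<longleftrightarrow> is_Umod M \<and>
     (\<forall>x\<in>carr M. \<exists>S f. finite S \<and> (\<forall>\<mu>\<in>S. f \<mu> \<in> wspace M \<mu>) \<and> x = (\<Sum>\<mu>\<in>S. f \<mu>))"

text \<open>mu <=_wt lambda iff lambda - mu = sum_i c_i alpha_i, c finitely supported, c_i in N,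
  where alpha_i = eps_i - eps_(i+1); at position j this reads c_j - c_(j-1).\<close>
definition le_wt :: "wt \<Rightarrow> wt \<Rightarrow> bool" where
  "le_wt \<mu> la \<longleftrightarrow> (\<exists>c :: int \<Rightarrow> nat. finite {i. c i \<noteq> 0} \<and>
      (\<forall>j. la j - \<mu> j = int (c j) - int (c (j - 1))))"

definition in_Chi :: "'b::ab_group_add umod \<Rightarrow> bool" where
  "in_Chi M \<longleftrightarrow> weight_module M \<and>
     (\<forall>x\<in>carr M. \<exists>n0. \<forall>w :: int list. length w \<ge> n0 \<longrightarrow> foldr (opE M) w x = 0)"

definition in_O :: "'b::ab_group_add umod \<Rightarrow> bool" where
  "in_O M \<longleftrightarrow> weight_module M \<and>
     (\<forall>la. \<exists>B. finite B \<and> wspace M la \<subseteq> module.span (smult M) B) \<and>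
     (\<exists>Las. finite Las \<and> wts M \<subseteq> {\<mu>. \<exists>la\<in>Las. le_wt \<mu> la})"

text \<open>M is (isomorphic to) L(lambda): M is an irreducible quotient of the Verma module M(lambda).
  Since M(lambda) = U/(sum U E_i + sum U (K_i - v^lambda_i)), its quotients are exactly the
  modules generated by a vector m annihilated by all E_i and K_i - v^lambda_i; for an irreducible
  module, any nonzero vector generates it.\<close>
definition is_L :: "wt \<Rightarrow> 'b::ab_group_add umod \<Rightarrow> bool" where
  "is_L la M \<longleftrightarrow> irreducible_mod M \<and>
     (\<exists>m\<in>carr M. m \<noteq> 0 \<and> (\<forall>i. opE M i m = 0 \<and> opK M i m = smult M (vq powi la i) m))"

end

theory Submission
  imports Defs "HOL-Library.Countable"
begin

text \<open>\<open>L(\<lambda>)\<close> is realised on finite linear combinations of words \<open>u\<close>, standing for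
  \<open>F\<^bsub>u\<^sub>1\<^esub> \<cdots> F\<^bsub>u\<^sub>n\<^esub> m\<close>, on which \<open>E\<^sub>i\<close> acts by commuting past the \<open>F\<close>'s: modulo the
  radical (the vectors that no word in the \<open>E\<^sub>i\<close> brings back to a nonzero multiple of \<open>m\<close>)
  this is irreducible of highest weight \<open>\<lambda>\<close>. Any irreducible module with a highest weight
  vector \<open>m\<close> of weight \<open>\<lambda>\<close> is the image of the same word space under \<open>u \<mapsto> F\<^sub>u m\<close>, and
  the kernel is exactly the radical, because the image of the radical is a submodule without
  weight \<open>\<lambda>\<close> component. So \<open>L(\<lambda>)\<close> is unique up to isomorphism, and \<open>\<lambda>\<close> is recovered from the
  unique highest weight line. \<open>L(\<lambda>)\<close> lies in \<open>C\<^sup>h\<^sup>i\<close> and \<open>\<O>\<close> since \<open>E\<close>-words shorten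
  words and only finitely many words have a given weight. Conversely, in an irreducible weight
  module of \<open>C\<^sup>h\<^sup>i\<close> or \<open>\<O>\<close> long \<open>E\<close>-words kill a weight vector (in \<open>\<O>\<close> because the weights
  lie below finitely many bounds), and a longest \<open>E\<close>-word not killing it yields a highest
  weight vector.\<close>

lemma Fract_const_power: "Fraction_Field.Fract (p::rat poly) 1 ^ n = Fraction_Field.Fract (p ^ n) 1"
  by (induct n) (simp_all add: One_fract_def)

lemma vq_nonzero: "vq \<noteq> 0"
  unfolding vq_def by (simp add: Zero_fract_def eq_fract)

lemma vq_power_neq_one: "n > 0 \<Longrightarrow> vq ^ n \<noteq> 1"
proof
  assume n: "n > 0" and "vq ^ n = 1"
  hence "Fraction_Field.Fract ([:0,1:] ^ n) 1 = Fraction_Field.Fract (1::rat poly) 1"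
    unfolding vq_def Fract_const_power One_fract_def by simp
  hence "[:0,1:] ^ n = (1::rat poly)" by (simp add: eq_fract)
  hence "degree ([:0,1::rat:] ^ n) = 0" by simp
  thus False using n by (simp add: degree_power_eq)
qed

lemma vq_powi_inject: "vq powi a = vq powi b \<longleftrightarrow> a = b"
proof
  assume eq: "vq powi a = vq powi b"
  show "a = b"
  proof (rule ccontr)
    assume "a \<noteq> b"
    then obtain n :: nat where "n > 0" "vq powi (int n) = 1"
      using eq vq_nonzero
      by (metis diff_gt_0_iff_gt linorder_neqE_linordered_idom power_int_diff right_inverse_eq
          zero_less_imp_eq_int of_nat_0_less_iff power_int_eq_0_iff)
    thus False using vq_power_neq_one by simp
  qed
qed simp

section \<open>Words, roots and weights\<close>

definition root :: "int \<Rightarrow> wt" where "root j = (\<lambda>i. dlt i j - dlt i (j + 1))"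

fun root_sum :: "int list \<Rightarrow> wt" where
  "root_sum [] = (\<lambda>i. 0)"
| "root_sum (a # w) = (\<lambda>i. root a i + root_sum w i)"

text \<open>The weight of \<open>F\<^bsub>u\<^sub>1\<^esub> \<cdots> F\<^bsub>u\<^sub>n\<^esub> m\<close> for \<open>m\<close> of weight \<open>la\<close>.\<close>
definition word_wt :: "wt \<Rightarrow> int list \<Rightarrow> wt" where
  "word_wt la u = (\<lambda>i. la i - root_sum u i)"

lemma root_apply: "root a b = (if b = a then 1 else 0) - (if b = a + 1 then 1 else 0)"
  by (simp add: root_def dlt_def)

lemma root_sum_append: "root_sum (u @ w) i = root_sum u i + root_sum w i"
  by (induct u) auto

lemma root_sum_count: "root_sum w i = int (count_list w i) - int (count_list w (i - 1))"
  by (induct w) (auto simp: root_apply)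

lemma word_wt_Nil [simp]: "word_wt la [] = la"
  by (simp add: word_wt_def)

lemma word_wt_Cons: "word_wt la (a # u) = (\<lambda>j. word_wt la u j - root a j)"
  by (simp add: word_wt_def fun_eq_iff)

lemma word_wt_insert: "word_wt la (take p u @ a # drop p u) = (\<lambda>j. word_wt la u j - root a j)"
proof -
  have "root_sum (take p u @ a # drop p u) j = root_sum u j + root a j" for j
    using root_sum_append[of "take p u" "a # drop p u" j] root_sum_append[of "take p u" "drop p u" j]
    by simp
  thus ?thesis by (simp add: word_wt_def fun_eq_iff)
qed

lemma count_list_pos: "x \<in> set w \<Longrightarrow> count_list w x > 0"
  using count_list_0_iff by fastforce

lemma root_sum_at_Min: "w \<noteq> [] \<Longrightarrow> root_sum w (Min (set w)) = int (count_list w (Min (set w)))"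
proof -
  have "Min (set w) - 1 \<notin> set w" using Min_le[of "set w" "Min (set w) - 1"] by fastforce
  thus ?thesis by (simp add: root_sum_count)
qed

lemma root_sum_above_Max:
  "w \<noteq> [] \<Longrightarrow> root_sum w (Max (set w) + 1) = - int (count_list w (Max (set w)))"
proof -
  have "Max (set w) + 1 \<notin> set w" using Max_ge[of "set w" "Max (set w) + 1"] by fastforce
  thus ?thesis by (simp add: root_sum_count)
qed

lemma root_sum_eq_zero_iff: "root_sum w = (\<lambda>i. 0) \<longleftrightarrow> w = []"
proof
  assume zero: "root_sum w = (\<lambda>i. 0)"
  show "w = []"
  proof (rule ccontr)
    assume "w \<noteq> []"
    hence "root_sum w (Max (set w) + 1) < 0"
      using root_sum_above_Max count_list_pos[of "Max (set w)" w] by simp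
    thus False using zero by simp
  qed
qed simp

lemma word_wt_eq_self_iff: "word_wt la w = la \<longleftrightarrow> w = []"
  using root_sum_eq_zero_iff[of w] by (auto simp: word_wt_def fun_eq_iff)

lemma root_sum_moment:
  assumes "set w \<subseteq> {lo..hi}"
  shows "(\<Sum>j\<in>{lo..hi+1}. j * root_sum w j) = - int (length w)"
  using assms
proof (induct w)
  case (Cons a w)
  have a: "a \<in> {lo..hi+1}" "a + 1 \<in> {lo..hi+1}" using Cons.prems by auto
  have "(\<Sum>j\<in>{lo..hi+1}. j * root_sum (a # w) j) =
      (\<Sum>j\<in>{lo..hi+1}. (if j = a then j else 0)) - (\<Sum>j\<in>{lo..hi+1}. (if j = a + 1 then j else 0))
      + (\<Sum>j\<in>{lo..hi+1}. j * root_sum w j)"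
    by (simp add: root_apply algebra_simps sum.distrib sum_subtractf if_distrib[of "\<lambda>x. _ * x"]
        cong: if_cong)
  also have "\<dots> = a - (a + 1) + (- int (length w))"
    using a Cons by (simp add: sum.delta)
  finally show ?case by simp
qed simp

lemma finite_root_sum_fibre: "finite {w. root_sum w = d}"
proof -
  define D where "D = {j. d j \<noteq> 0}"
  define lo where "lo = Min D"
  define hi where "hi = Max D"
  define N where "N = nat (- (\<Sum>j\<in>{lo..hi+1}. j * d j))"
  have "{w. root_sum w = d} \<subseteq> {w. set w \<subseteq> {lo..hi} \<and> length w = N}"
  proof (rule subsetI)
    fix w assume "w \<in> {w. root_sum w = d}"
    hence wd: "root_sum w = d" by simp
    have "D \<subseteq> set w \<union> (\<lambda>a. a + 1) ` set w"
      using wd by (force simp: D_def root_sum_count count_list_0_iff)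
    hence fD: "finite D" by (rule finite_subset) simp
    have sw: "set w \<subseteq> {lo..hi}"
    proof (cases "w = []")
      case False
      have "Min (set w) \<in> D" "Max (set w) + 1 \<in> D"
        using root_sum_at_Min[OF False] root_sum_above_Max[OF False] wd False
          count_list_pos[of "Min (set w)" w] count_list_pos[of "Max (set w)" w]
        by (auto simp: D_def)
      hence bounds: "lo \<le> Min (set w)" "Max (set w) + 1 \<le> hi"
        using fD by (simp_all add: lo_def hi_def)
      show ?thesis
      proof
        fix x assume "x \<in> set w"
        hence "Min (set w) \<le> x" "x \<le> Max (set w)" by simp_all
        thus "x \<in> {lo..hi}" using bounds by simp
      qed
    qed simp
    moreover have "length w = N" using root_sum_moment[OF sw] wd by (simp add: N_def)
    ultimately show "w \<in> {w. set w \<subseteq> {lo..hi} \<and> length w = N}" by simp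
  qed
  moreover have "finite {w. set w \<subseteq> {lo..hi} \<and> length w = N}" by (rule finite_lists_length_eq) simp
  ultimately show ?thesis by (rule finite_subset)
qed

lemma finite_word_wt_fibre: "finite {w. word_wt la w = nu}"
proof -
  have "{w. word_wt la w = nu} = {w. root_sum w = (\<lambda>i. la i - nu i)}"
    by (auto simp: word_wt_def fun_eq_iff algebra_simps)
  thus ?thesis using finite_root_sum_fibre by simp
qed

lemma le_wt_word_wt: "le_wt (word_wt la w) la"
  unfolding le_wt_def
proof (intro exI[of _ "count_list w"] conjI allI)
  show "finite {i. count_list w i \<noteq> 0}"
    by (rule finite_subset[of _ "set w"]) (auto simp: count_list_0_iff)
qed (simp add: word_wt_def root_sum_count)

lemma exists_maximal_word:
  assumes "P []" and bounded: "\<And>e. P e \<Longrightarrow> length e < n"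
  shows "\<exists>e. P e \<and> (\<forall>i. \<not> P (i # e))"
proof -
  have "P e \<Longrightarrow> \<exists>e'. P e' \<and> (\<forall>i. \<not> P (i # e'))" for e
  proof (induct "n - length e" arbitrary: e rule: less_induct)
    case less
    show ?case
    proof (cases "\<exists>i. P (i # e)")
      case True
      then obtain i where "P (i # e)" ..
      moreover have "n - length (i # e) < n - length e" using bounded[OF less.prems] by simp
      ultimately show ?thesis using less.hyps by blast
    qed (use less.prems in blast)
  qed
  thus ?thesis using assms(1) by blast
qed

text \<open>The scalar by which \<open>E\<^sub>iF\<^sub>i - F\<^sub>iE\<^sub>i\<close> acts on weight \<open>mu\<close>.\<close>
definition ef_scalar :: "wt \<Rightarrow> int \<Rightarrow> qv" where
  "ef_scalar mu i = inverse (vq - inverse vq) *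
     (vq powi mu i * vq powi (- mu (i + 1)) - vq powi (mu (i + 1)) * vq powi (- mu i))"

section \<open>Modules over U(\<infinity>) and their weight spaces\<close>

locale umodule =
  fixes M :: "'b::ab_group_add umod"
  assumes is_Umod: "is_Umod M"
begin

sublocale vs: vector_space "smult M"
  using is_Umod by (simp add: is_Umod_def)

lemma carr_subspace: "vs.subspace (carr M)"
  using is_Umod by (simp add: is_Umod_def)

lemmas carr_zero = vs.subspace_0[OF carr_subspace]
  and carr_add = vs.subspace_add[OF carr_subspace]
  and carr_scale = vs.subspace_scale[OF carr_subspace]
  and carr_sum = vs.subspace_sum[OF carr_subspace]

lemma lin_on_ops: "lin_on M (opE M i)" "lin_on M (opF M i)" "lin_on M (opK M i)" "lin_on M (opKi M i)"
  using is_Umod by (simp_all add: is_Umod_def)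

lemma lin_on_carr: "lin_on M f \<Longrightarrow> x \<in> carr M \<Longrightarrow> f x \<in> carr M"
  and lin_on_add: "lin_on M f \<Longrightarrow> x \<in> carr M \<Longrightarrow> y \<in> carr M \<Longrightarrow> f (x + y) = f x + f y"
  and lin_on_scale: "lin_on M f \<Longrightarrow> x \<in> carr M \<Longrightarrow> f (smult M c x) = smult M c (f x)"
  by (simp_all add: lin_on_def)

lemma lin_on_zero: "lin_on M f \<Longrightarrow> f 0 = 0"
  using lin_on_scale[of f 0 0] carr_zero by simp

lemma lin_on_sum:
  "lin_on M f \<Longrightarrow> (\<And>w. w \<in> S \<Longrightarrow> g w \<in> carr M) \<Longrightarrow> f (sum g S) = (\<Sum>w\<in>S. f (g w))"
  by (induct S rule: infinite_finite_induct) (simp_all add: lin_on_zero lin_on_add carr_sum)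

lemma umod_relations:
  assumes "x \<in> carr M"
  shows "opK M i (opKi M i x) = x" "opKi M i (opK M i x) = x"
    "opK M i (opE M j x) = smult M (vq powi (dlt i j - dlt i (j + 1))) (opE M j (opK M i x))"
    "opK M i (opF M j x) = smult M (vq powi (dlt i (j + 1) - dlt i j)) (opF M j (opK M i x))"
    "opE M i (opF M j x) - opF M j (opE M i x) =
      (if i = j then smult M (inverse (vq - inverse vq))
         (opK M i (opKi M (i + 1) x) - opK M (i + 1) (opKi M i x)) else 0)"
  using is_Umod assms unfolding is_Umod_def by blast+

lemma wspace_carr: "x \<in> wspace M mu \<Longrightarrow> x \<in> carr M"
  by (simp add: wspace_def)

lemma opK_wspace: "x \<in> wspace M mu \<Longrightarrow> opK M i x = smult M (vq powi (mu i)) x"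
  by (simp add: wspace_def)

lemma wspace_subspace: "vs.subspace (wspace M mu)"
proof (rule vs.subspaceI)
  show "0 \<in> wspace M mu"
    using carr_zero lin_on_zero[OF lin_on_ops(3)] by (simp add: wspace_def)
  show "x + y \<in> wspace M mu" if "x \<in> wspace M mu" "y \<in> wspace M mu" for x y
    using that by (simp add: wspace_def carr_add lin_on_add[OF lin_on_ops(3)] vs.scale_right_distrib)
  show "smult M c x \<in> wspace M mu" if "x \<in> wspace M mu" for c x
    using that by (simp add: wspace_def carr_scale lin_on_scale[OF lin_on_ops(3)] vs.scale_left_commute)
qed

lemma opE_wspace:
  assumes x: "x \<in> wspace M mu"
  shows "opE M j x \<in> wspace M (\<lambda>i. mu i + root j i)"
proof -
  have xc: "x \<in> carr M" using x by (rule wspace_carr)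
  have "opK M i (opE M j x) = smult M (vq powi (root j i)) (opE M j (smult M (vq powi mu i) x))" for i
    using umod_relations(3)[OF xc, of i j] x by (simp add: root_def wspace_def)
  also have "\<dots> i = smult M (vq powi (mu i + root j i)) (opE M j x)" for i
    using vq_nonzero xc by (simp add: lin_on_scale[OF lin_on_ops(1)] power_int_add mult.commute)
  finally show ?thesis using xc by (simp add: wspace_def lin_on_carr[OF lin_on_ops(1)])
qed

lemma opF_wspace:
  assumes x: "x \<in> wspace M mu"
  shows "opF M j x \<in> wspace M (\<lambda>i. mu i - root j i)"
proof -
  have xc: "x \<in> carr M" using x by (rule wspace_carr)
  have "opK M i (opF M j x) = smult M (vq powi (- root j i)) (opF M j (smult M (vq powi mu i) x))" for i
    using umod_relations(4)[OF xc, of i j] x by (simp add: root_def wspace_def)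
  also have "\<dots> i = smult M (vq powi (mu i - root j i)) (opF M j x)" for i
    using vq_nonzero xc
    by (simp add: lin_on_scale[OF lin_on_ops(2)] power_int_diff power_int_minus field_simps)
  finally show ?thesis using xc by (simp add: wspace_def lin_on_carr[OF lin_on_ops(2)])
qed

lemma opKi_wspace:
  assumes x: "x \<in> wspace M mu"
  shows "opKi M i x = smult M (vq powi (- mu i)) x"
proof -
  have xc: "x \<in> carr M" using x by (rule wspace_carr)
  have "opKi M i x = opKi M i (smult M (vq powi (- mu i)) (smult M (vq powi mu i) x))"
    using vq_nonzero by (simp add: power_int_minus)
  also have "\<dots> = opKi M i (smult M (vq powi (- mu i)) (opK M i x))"
    using x by (simp add: wspace_def)
  also have "\<dots> = smult M (vq powi (- mu i)) x"
    using xc by (simp add: lin_on_scale[OF lin_on_ops(4)] lin_on_carr[OF lin_on_ops(3)] umod_relations(2))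
  finally show ?thesis .
qed

lemma foldr_opE_wspace:
  "y \<in> wspace M mu \<Longrightarrow> foldr (opE M) w y \<in> wspace M (\<lambda>i. mu i + root_sum w i)"
proof (induct w)
  case (Cons a w)
  hence "opE M a (foldr (opE M) w y) \<in> wspace M (\<lambda>i. (mu i + root_sum w i) + root a i)"
    by (intro opE_wspace) auto
  thus ?case by (simp add: algebra_simps)
qed simp

lemma foldr_opE_zero: "foldr (opE M) e 0 = 0"
  by (induct e) (simp_all add: lin_on_zero[OF lin_on_ops(1)])

lemma opE_opF_wspace:
  assumes y: "y \<in> wspace M mu"
  shows "opE M i (opF M k y) = opF M k (opE M i y) + (if i = k then smult M (ef_scalar mu i) y else 0)"
proof -
  have yc: "y \<in> carr M" using y by (rule wspace_carr)
  have "opK M i (opKi M (i + 1) y) = smult M (vq powi mu i * vq powi (- mu (i + 1))) y"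
    and "opK M (i + 1) (opKi M i y) = smult M (vq powi mu (i + 1) * vq powi (- mu i)) y"
    using opKi_wspace[OF y] opK_wspace[OF y] yc by (simp_all add: lin_on_scale[OF lin_on_ops(3)] mult_ac)
  hence "smult M (inverse (vq - inverse vq)) (opK M i (opKi M (i + 1) y) - opK M (i + 1) (opKi M i y))
      = smult M (ef_scalar mu i) y"
    by (simp add: ef_scalar_def vs.scale_left_diff_distrib[symmetric])
  hence "opE M i (opF M k y) - opF M k (opE M i y) = (if i = k then smult M (ef_scalar mu i) y else 0)"
    using umod_relations(5)[OF yc, of i k] by (cases "i = k") simp_all
  thus ?thesis by (simp add: diff_eq_eq add.commute)
qed

text \<open>Applying \<open>K\<^sub>i - v\<^bsup>c\<^sub>i\<^esup>\<close> kills the component of weight \<open>c\<close> and rescales every other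
  one by a nonzero factor, which allows induction on the number of weights.\<close>
lemma wspace_independent:
  assumes "finite A" "\<And>a. a \<in> A \<Longrightarrow> x a \<in> wspace M a" "(\<Sum>a\<in>A. x a) = 0" "b \<in> A"
  shows "x b = 0"
  using assms
proof (induct "card A" arbitrary: A x rule: less_induct)
  case less
  show ?case
  proof (cases "A = {b}")
    case True thus ?thesis using less by simp
  next
    case False
    then obtain c where c: "c \<in> A" "c \<noteq> b" using less(5) by blast
    then obtain i where i: "b i \<noteq> c i" by (metis ext)
    define y where "y a = smult M (vq powi (a i) - vq powi (c i)) (x a)" for a
    have yw: "y a \<in> wspace M a" if "a \<in> A" for a
      using less(3)[OF that] wspace_subspace vs.subspace_scale unfolding y_def by blast
    have "(\<Sum>a\<in>A. y a) = (\<Sum>a\<in>A. opK M i (x a) - smult M (vq powi (c i)) (x a))"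
      using opK_wspace[OF less(3)] by (intro sum.cong) (simp_all add: y_def vs.scale_left_diff_distrib)
    also have "\<dots> = opK M i (\<Sum>a\<in>A. x a) - smult M (vq powi (c i)) (\<Sum>a\<in>A. x a)"
    proof -
      have "opK M i (\<Sum>a\<in>A. x a) = (\<Sum>a\<in>A. opK M i (x a))"
        using less(3) wspace_carr by (intro lin_on_sum[OF lin_on_ops(3)]) blast
      thus ?thesis by (simp add: sum_subtractf vs.scale_sum_right)
    qed
    also have "\<dots> = 0" using less(4) lin_on_zero[OF lin_on_ops(3)] by simp
    finally have "(\<Sum>a\<in>A - {c}. y a) = 0"
      using c(1) less(2) by (simp add: sum.remove y_def)
    moreover have "card (A - {c}) < card A" using c(1) less(2) by (meson card_Diff1_less)
    ultimately have "y b = 0" using less(1)[of "A - {c}" y] less(2,5) c yw by auto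
    moreover have "vq powi (b i) - vq powi (c i) \<noteq> 0" using i vq_powi_inject by auto
    ultimately show ?thesis unfolding y_def by simp
  qed
qed

end

section \<open>The module of F-words\<close>

definition fscale :: "'k::field \<Rightarrow> ('a \<Rightarrow> 'k) \<Rightarrow> 'a \<Rightarrow> 'k" where
  "fscale c f = (\<lambda>x. c * f x)"

lemma fscale_apply [simp]: "fscale c f x = c * f x"
  by (simp add: fscale_def)

lemma vector_space_fscale: "vector_space (fscale :: 'k::field \<Rightarrow> ('a \<Rightarrow> 'k) \<Rightarrow> _)"
  by unfold_locales (simp_all add: fun_eq_iff algebra_simps)

interpretation fun_vs: vector_space "fscale :: 'k::field \<Rightarrow> ('a \<Rightarrow> 'k) \<Rightarrow> _"
  by (rule vector_space_fscale)

interpretation fun_pair: vector_space_pair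
  "fscale :: 'k::field \<Rightarrow> ('a \<Rightarrow> 'k) \<Rightarrow> _" "fscale :: 'k \<Rightarrow> ('b \<Rightarrow> 'k) \<Rightarrow> _" ..

text \<open>A vector \<open>t\<close> stands for \<open>\<Sum>\<^sub>u t u \<cdot> F\<^bsub>u\<^sub>1\<^esub> \<cdots> F\<^bsub>u\<^sub>n\<^esub> m\<close>: the \<open>F\<^sub>k\<close> act freely by
  prefixing \<open>k\<close>, the \<open>K\<^sub>i\<close> diagonally through \<open>word_wt\<close>, and \<open>E\<^sub>i\<close> by commuting it past the
  \<open>F\<close>'s down to \<open>m\<close>, where it vanishes.\<close>
type_synonym wvec = "int list \<Rightarrow> qv"

definition opFW :: "int \<Rightarrow> wvec \<Rightarrow> wvec" where
  "opFW k t = (\<lambda>u. case u of [] \<Rightarrow> 0 | a # u' \<Rightarrow> if a = k then t u' else 0)"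

definition diagW :: "wt \<Rightarrow> (wt \<Rightarrow> qv) \<Rightarrow> wvec \<Rightarrow> wvec" where
  "diagW la f t = (\<lambda>u. f (word_wt la u) * t u)"

definition opEW :: "wt \<Rightarrow> int \<Rightarrow> wvec \<Rightarrow> wvec" where
  "opEW la i t = (\<lambda>u. \<Sum>p\<in>{0..length u}.
     ef_scalar (word_wt la (drop p u)) i * t (take p u @ i # drop p u))"

definition opKW :: "wt \<Rightarrow> int \<Rightarrow> wvec \<Rightarrow> wvec" where
  "opKW la i = diagW la (\<lambda>mu. vq powi mu i)"

definition opKiW :: "wt \<Rightarrow> int \<Rightarrow> wvec \<Rightarrow> wvec" where
  "opKiW la i = diagW la (\<lambda>mu. vq powi (- mu i))"

lemma opFW_Nil [simp]: "opFW k t [] = 0"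
  and opFW_Cons [simp]: "opFW k t (a # u) = (if a = k then t u else 0)"
  by (simp_all add: opFW_def)

lemma diagW_apply [simp]: "diagW la f t u = f (word_wt la u) * t u"
  by (simp add: diagW_def)

lemma linear_opFW: "Vector_Spaces.linear fscale fscale (opFW k)"
  by (auto simp: Vector_Spaces.linear_iff vector_space_fscale opFW_def fun_eq_iff split: list.split)

lemma linear_diagW: "Vector_Spaces.linear fscale fscale (diagW la f)"
  by (auto simp: Vector_Spaces.linear_iff vector_space_fscale fun_eq_iff algebra_simps)

lemma linear_opEW: "Vector_Spaces.linear fscale fscale (opEW la i)"
  by (auto simp: Vector_Spaces.linear_iff vector_space_fscale opEW_def fun_eq_iff algebra_simps
      sum.distrib sum_distrib_left)

lemmas linear_opKW = linear_diagW[of la "\<lambda>mu. vq powi mu i" for la i, folded opKW_def]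
  and linear_opKiW = linear_diagW[of la "\<lambda>mu. vq powi (- mu i)" for la i, folded opKiW_def]

lemmas opW_linear_simps =
  fun_pair.linear_add[OF linear_opEW] fun_pair.linear_diff[OF linear_opEW]
  fun_pair.linear_scale[OF linear_opEW] fun_pair.linear_0[OF linear_opEW]
  fun_pair.linear_add[OF linear_opFW] fun_pair.linear_diff[OF linear_opFW]
  fun_pair.linear_scale[OF linear_opFW] fun_pair.linear_0[OF linear_opFW]
  fun_pair.linear_add[OF linear_diagW] fun_pair.linear_diff[OF linear_diagW]
  fun_pair.linear_scale[OF linear_diagW] fun_pair.linear_0[OF linear_diagW]

lemma opEW_opFW:
  "opEW la i (opFW k t) = opFW k (opEW la i t) + (if i = k then diagW la (\<lambda>mu. ef_scalar mu i) t else 0)"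
proof (rule ext)
  fix u
  show "opEW la i (opFW k t) u =
      (opFW k (opEW la i t) + (if i = k then diagW la (\<lambda>mu. ef_scalar mu i) t else 0)) u"
  proof (cases u)
    case (Cons a u')
    have "opEW la i (opFW k t) u = ef_scalar (word_wt la u) i * opFW k t (i # u) +
        (\<Sum>q = 0..length u'. ef_scalar (word_wt la (drop q u')) i * opFW k t (a # (take q u' @ i # drop q u')))"
      unfolding opEW_def Cons length_Cons sum.atLeast0_atMost_Suc_shift by simp
    thus ?thesis using Cons by (simp add: opEW_def)
  qed (simp add: opEW_def)
qed

lemma opEW_diagW: "opEW la i (diagW la f t) = diagW la (\<lambda>mu. f (\<lambda>j. mu j - root i j)) (opEW la i t)"
  by (rule ext) (simp add: opEW_def word_wt_insert sum_distrib_left mult_ac)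

lemma opFW_diagW: "opFW k (diagW la f t) = diagW la (\<lambda>mu. f (\<lambda>j. mu j + root k j)) (opFW k t)"
proof (rule ext)
  fix u show "opFW k (diagW la f t) u = diagW la (\<lambda>mu. f (\<lambda>j. mu j + root k j)) (opFW k t) u"
    by (cases u) (simp_all add: word_wt_Cons)
qed

lemma opKW_opKiW: "opKW la i (opKiW la i t) = t" "opKiW la i (opKW la i t) = t"
  using vq_nonzero by (auto simp: opKW_def opKiW_def fun_eq_iff power_int_minus)

lemma opKW_opEW: "opKW la i (opEW la j t) = fscale (vq powi (dlt i j - dlt i (j + 1))) (opEW la j (opKW la i t))"
  unfolding opKW_def opEW_diagW using vq_nonzero
  by (intro ext) (simp add: root_def power_int_diff power_int_add field_simps)

lemma opKW_opFW: "opKW la i (opFW j t) = fscale (vq powi (dlt i (j + 1) - dlt i j)) (opFW j (opKW la i t))"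
  unfolding opKW_def opFW_diagW using vq_nonzero
  by (intro ext) (simp add: root_def power_int_diff power_int_add field_simps)

lemma opEW_opFW_commutator: "opEW la i (opFW j t) - opFW j (opEW la i t) =
  (if i = j then fscale (inverse (vq - inverse vq))
     (opKW la i (opKiW la (i + 1) t) - opKW la (i + 1) (opKiW la i t)) else 0)"
  unfolding opEW_opFW by (rule ext) (simp add: opKW_def opKiW_def ef_scalar_def algebra_simps)

definition qint :: "int \<Rightarrow> qv" where
  "qint n = inverse (vq - inverse vq) * (vq powi n - vq powi (- n))"

lemma ef_scalar_qint: "ef_scalar mu i = qint (mu i - mu (i + 1))"
  unfolding ef_scalar_def qint_def using vq_nonzero
  by (simp add: power_int_add[symmetric] power_int_diff)

definition serreE :: "wt \<Rightarrow> int \<Rightarrow> int \<Rightarrow> wvec \<Rightarrow> wvec" where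
  "serreE la i j t = opEW la i (opEW la i (opEW la j t))
     - fscale (vq + inverse vq) (opEW la i (opEW la j (opEW la i t))) + opEW la j (opEW la i (opEW la i t))"

definition serreF :: "int \<Rightarrow> int \<Rightarrow> wvec \<Rightarrow> wvec" where
  "serreF i j t = opFW i (opFW i (opFW j t))
     - fscale (vq + inverse vq) (opFW i (opFW j (opFW i t))) + opFW j (opFW i (opFW i t))"

text \<open>Commuting \<open>F\<^sub>k\<close> to the front leaves diagonal terms with quantum integer coefficients,
  which cancel by identities like \<open>[n + 1] + [n - 1] = (v + v\<^sup>-\<^sup>1) [n]\<close>. Naming
  \<open>(v - v\<^sup>-\<^sup>1)\<^sup>-\<^sup>1\<close> keeps \<open>field_simps\<close> from expanding it.\<close>
lemma serreE_opFW:
  assumes "\<bar>i - j\<bar> = 1"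
  shows "serreE la i j (opFW k t) = opFW k (serreE la i j t)"
proof (rule ext)
  fix u
  obtain D where "inverse (vq - inverse vq) = D" by blast
  hence qint_D: "qint m = D * (vq powi m - inverse (vq powi m))" for m
    by (simp add: qint_def power_int_minus)
  have "j = i + 1 \<or> j = i - 1" using assms by arith
  thus "serreE la i j (opFW k t) u = opFW k (serreE la i j t) u"
    apply (cases "k = i"; cases "k = j")
    apply (auto simp: serreE_def opEW_opFW opEW_diagW opW_linear_simps ef_scalar_qint root_apply)
    using vq_nonzero
    apply (auto simp: qint_D power_int_add power_int_diff field_simps)
    apply (simp_all add: eval_nat_numeral algebra_simps)
    done
qed

lemma opEW_serreF:
  assumes "\<bar>i - j\<bar> = 1"
  shows "opEW la k (serreF i j t) = serreF i j (opEW la k t)"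
proof (rule ext)
  fix u
  obtain D where "inverse (vq - inverse vq) = D" by blast
  hence qint_D: "qint m = D * (vq powi m - inverse (vq powi m))" for m
    by (simp add: qint_def power_int_minus)
  have "j = i + 1 \<or> j = i - 1" using assms by arith
  thus "opEW la k (serreF i j t) u = serreF i j (opEW la k t) u"
    apply (cases "k = i"; cases "k = j")
    apply (auto simp: serreF_def opEW_opFW opFW_diagW opW_linear_simps ef_scalar_qint root_apply)
    using vq_nonzero
    apply (auto simp: qint_D power_int_add power_int_diff field_simps)
    apply (simp_all add: eval_nat_numeral algebra_simps)
    done
qed

definition commE :: "wt \<Rightarrow> int \<Rightarrow> int \<Rightarrow> wvec \<Rightarrow> wvec" where
  "commE la i j t = opEW la i (opEW la j t) - opEW la j (opEW la i t)"

definition commF :: "int \<Rightarrow> int \<Rightarrow> wvec \<Rightarrow> wvec" where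
  "commF i j t = opFW i (opFW j t) - opFW j (opFW i t)"

lemma commE_opFW:
  assumes "\<bar>i - j\<bar> > 1"
  shows "commE la i j (opFW k t) = opFW k (commE la i j t)"
proof -
  have "i \<noteq> j" "j \<noteq> i + 1" "i \<noteq> j + 1" using assms by arith+
  thus ?thesis
    by (cases "k = i"; cases "k = j")
      (auto simp: commE_def opEW_opFW opEW_diagW opW_linear_simps ef_scalar_qint root_apply)
qed

lemma opEW_commF:
  assumes "\<bar>i - j\<bar> > 1"
  shows "opEW la k (commF i j t) = commF i j (opEW la k t)"
proof -
  have "i \<noteq> j" "j \<noteq> i + 1" "i \<noteq> j + 1" using assms by arith+
  thus ?thesis
    by (cases "k = i"; cases "k = j")
      (auto simp: commF_def opEW_opFW opFW_diagW opW_linear_simps ef_scalar_qint root_apply)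
qed

definition fin_supp :: "wvec set" where
  "fin_supp = {t. finite {u. t u \<noteq> 0}}"

definition word_vec :: "int list \<Rightarrow> wvec" where
  "word_vec w = (\<lambda>u. if u = w then 1 else 0)"

lemma opFW_word_vec: "opFW k (word_vec w) = word_vec (k # w)"
  by (rule ext) (simp add: opFW_def word_vec_def split: list.split)

lemma opEW_word_vec_Nil: "opEW la i (word_vec []) = 0"
  by (rule ext) (simp add: opEW_def word_vec_def)

lemma diagW_word_vec: "diagW la f (word_vec w) = fscale (f (word_wt la w)) (word_vec w)"
  by (rule ext) (simp add: word_vec_def)

lemma word_vec_fin_supp: "word_vec w \<in> fin_supp"
proof -
  have "{u. word_vec w u \<noteq> 0} = {w}" by (auto simp: word_vec_def)
  thus ?thesis by (simp add: fin_supp_def)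
qed

lemma fin_supp_subspace: "fun_vs.subspace fin_supp"
proof (rule fun_vs.subspaceI)
  show "t + s \<in> fin_supp" if "t \<in> fin_supp" "s \<in> fin_supp" for t s
  proof -
    have "{u. (t + s) u \<noteq> 0} \<subseteq> {u. t u \<noteq> 0} \<union> {u. s u \<noteq> 0}" by auto
    thus ?thesis using that by (auto simp: fin_supp_def intro: finite_subset)
  qed
  show "fscale c t \<in> fin_supp" if "t \<in> fin_supp" for c t
  proof -
    have "{u. fscale c t u \<noteq> 0} \<subseteq> {u. t u \<noteq> 0}" by auto
    thus ?thesis using that by (auto simp: fin_supp_def intro: finite_subset)
  qed
qed (simp add: fin_supp_def)

lemmas fin_supp_zero = fun_vs.subspace_0[OF fin_supp_subspace]
  and fin_supp_add = fun_vs.subspace_add[OF fin_supp_subspace]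
  and fin_supp_diff = fun_vs.subspace_diff[OF fin_supp_subspace]
  and fin_supp_scale = fun_vs.subspace_scale[OF fin_supp_subspace]

lemma word_vec_expansion:
  assumes "finite S" "{u. t u \<noteq> 0} \<subseteq> S"
  shows "t = (\<Sum>w\<in>S. fscale (t w) (word_vec w))"
proof (rule ext)
  fix u
  have "(\<Sum>w\<in>S. fscale (t w) (word_vec w)) u = (\<Sum>w\<in>S. t w * word_vec w u)"
    by (induct S rule: infinite_finite_induct) auto
  also have "\<dots> = t u"
    using assms by (auto simp: word_vec_def if_distrib[of "\<lambda>x. _ * x"] cong: if_cong)
  finally show "t u = (\<Sum>w\<in>S. fscale (t w) (word_vec w)) u" by simp
qed

lemma fin_supp_in_span:
  assumes "t \<in> fin_supp"
  shows "t \<in> fun_vs.span (range word_vec)"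
proof -
  have "(\<Sum>w\<in>{u. t u \<noteq> 0}. fscale (t w) (word_vec w)) \<in> fun_vs.span (range word_vec)"
    by (intro fun_vs.span_sum fun_vs.span_scale fun_vs.span_base) simp
  thus ?thesis using word_vec_expansion[of "{u. t u \<noteq> 0}" t] assms by (simp add: fin_supp_def)
qed

lemma linear_eq_on_fin_supp:
  assumes "Vector_Spaces.linear fscale fscale X" "Vector_Spaces.linear fscale fscale Y"
    and "\<And>w. X (word_vec w) = Y (word_vec w)" and "t \<in> fin_supp"
  shows "X t = Y t"
  using fun_pair.linear_eq_on[OF assms(1,2) fin_supp_in_span[OF assms(4)]] assms(3) by blast

lemma fin_supp_diagW: "t \<in> fin_supp \<Longrightarrow> diagW la f t \<in> fin_supp"
proof -
  have "{u. diagW la f t u \<noteq> 0} \<subseteq> {u. t u \<noteq> 0}" by auto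
  thus "t \<in> fin_supp \<Longrightarrow> diagW la f t \<in> fin_supp" by (auto simp: fin_supp_def intro: finite_subset)
qed

lemma fin_supp_opFW: "t \<in> fin_supp \<Longrightarrow> opFW k t \<in> fin_supp"
proof -
  have "{u. opFW k t u \<noteq> 0} \<subseteq> Cons k ` {u. t u \<noteq> 0}"
  proof
    fix u assume "u \<in> {u. opFW k t u \<noteq> 0}"
    thus "u \<in> Cons k ` {u. t u \<noteq> 0}" by (cases u) (auto split: if_splits)
  qed
  thus "t \<in> fin_supp \<Longrightarrow> opFW k t \<in> fin_supp" by (auto simp: fin_supp_def intro: finite_subset)
qed

text \<open>A word in the support of \<open>opEW la i t\<close> arises by deleting one letter from a word
  in the support of \<open>t\<close>.\<close>
lemma fin_supp_opEW: "t \<in> fin_supp \<Longrightarrow> opEW la i t \<in> fin_supp"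
proof -
  assume t: "t \<in> fin_supp"
  let ?D = "\<Union>w\<in>{u. t u \<noteq> 0}. (\<lambda>p. take p w @ drop (Suc p) w) ` {0..<length w}"
  have "{u. opEW la i t u \<noteq> 0} \<subseteq> ?D"
  proof
    fix u assume "u \<in> {u. opEW la i t u \<noteq> 0}"
    then obtain p where "p \<in> {0..length u}"
      "ef_scalar (word_wt la (drop p u)) i * t (take p u @ i # drop p u) \<noteq> 0"
      unfolding opEW_def by (blast elim: sum.not_neutral_contains_not_neutral)
    hence p: "p \<le> length u" "t (take p u @ i # drop p u) \<noteq> 0" by simp_all
    let ?w = "take p u @ i # drop p u"
    have "u = take p ?w @ drop (Suc p) ?w" "p < length ?w" using p(1) by simp_all
    hence "u \<in> (\<lambda>p. take p ?w @ drop (Suc p) ?w) ` {0..<length ?w}"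
      by (intro image_eqI[of u _ p]) simp_all
    thus "u \<in> ?D" using p(2) by blast
  qed
  moreover have "finite ?D" using t by (simp add: fin_supp_def)
  ultimately show ?thesis by (auto simp: fin_supp_def intro: finite_subset)
qed

lemma fin_supp_opKW: "t \<in> fin_supp \<Longrightarrow> opKW la i t \<in> fin_supp"
  and fin_supp_opKiW: "t \<in> fin_supp \<Longrightarrow> opKiW la i t \<in> fin_supp"
  by (simp_all add: opKW_def opKiW_def fin_supp_diagW)

lemma fin_supp_foldr_opEW: "t \<in> fin_supp \<Longrightarrow> foldr (opEW la) e t \<in> fin_supp"
  by (induct e) (simp_all add: fin_supp_opEW)

lemma commutes_opFW_vanishes:
  assumes X: "Vector_Spaces.linear fscale fscale X" and comm: "\<And>k t. X (opFW k t) = opFW k (X t)"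
    and Nil: "X (word_vec []) = 0" and t: "t \<in> fin_supp"
  shows "X t = 0"
proof (rule linear_eq_on_fin_supp[OF X _ _ t])
  show "Vector_Spaces.linear fscale fscale (\<lambda>t. 0)"
    by (simp add: Vector_Spaces.linear_iff vector_space_fscale fun_eq_iff)
  show "X (word_vec w) = 0" for w
  proof (induct w)
    case (Cons k w) thus ?case
      by (simp only: opFW_word_vec[symmetric] comm fun_pair.linear_0[OF linear_opFW])
  qed (rule Nil)
qed

lemma serreE_fin_supp:
  assumes "\<bar>i - j\<bar> = 1" "t \<in> fin_supp"
  shows "serreE la i j t = 0"
proof (rule commutes_opFW_vanishes[OF _ serreE_opFW[OF assms(1)] _ assms(2)])
  show "Vector_Spaces.linear fscale fscale (serreE la i j)"
    by (auto simp: Vector_Spaces.linear_iff vector_space_fscale serreE_def opW_linear_simps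
        fun_vs.scale_right_distrib fun_vs.scale_right_diff_distrib)
qed (simp only: serreE_def opEW_word_vec_Nil fun_pair.linear_0[OF linear_opEW]
    fun_vs.scale_zero_right diff_self add_0_right)

lemma commE_fin_supp:
  assumes "\<bar>i - j\<bar> > 1" "t \<in> fin_supp"
  shows "commE la i j t = 0"
proof (rule commutes_opFW_vanishes[OF _ commE_opFW[OF assms(1)] _ assms(2)])
  show "Vector_Spaces.linear fscale fscale (commE la i j)"
    by (auto simp: Vector_Spaces.linear_iff vector_space_fscale commE_def opW_linear_simps
        fun_vs.scale_right_diff_distrib)
qed (simp only: commE_def opEW_word_vec_Nil fun_pair.linear_0[OF linear_opEW] diff_self)

section \<open>The radical\<close>

text \<open>The vectors from which no word in the \<open>E\<^sub>i\<close> reaches the highest weight line, i.e. the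
  radical of the Shapovalov form. Its quotient is \<open>L(\<lambda>)\<close>.\<close>
definition radical :: "wt \<Rightarrow> wvec set" where
  "radical la = {t. \<forall>e. foldr (opEW la) e t [] = 0}"

lemma linear_foldr_opEW: "Vector_Spaces.linear fscale fscale (foldr (opEW la) e)"
proof (induct e)
  case Nil show ?case by (simp only: foldr_Nil fun_vs.linear_id)
next
  case (Cons i e)
  have "Vector_Spaces.linear fscale fscale (opEW la i \<circ> foldr (opEW la) e)"
    by (rule Vector_Spaces.linear_compose[OF Cons linear_opEW])
  thus ?case by (simp only: foldr.simps)
qed

lemmas foldr_opEW_linear_simps =
  fun_pair.linear_add[OF linear_foldr_opEW] fun_pair.linear_diff[OF linear_foldr_opEW]
  fun_pair.linear_scale[OF linear_foldr_opEW] fun_pair.linear_0[OF linear_foldr_opEW]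

lemma radical_subspace: "fun_vs.subspace (radical la)"
  by (rule fun_vs.subspaceI) (simp_all add: radical_def foldr_opEW_linear_simps)

lemmas radical_zero = fun_vs.subspace_0[OF radical_subspace]

lemma radical_opEW:
  assumes "t \<in> radical la"
  shows "opEW la i t \<in> radical la"
proof -
  have "foldr (opEW la) e (opEW la i t) [] = foldr (opEW la) (e @ [i]) t []" for e by simp
  thus ?thesis using assms by (simp add: radical_def del: foldr_append)
qed

lemma foldr_opEW_diagW: "\<exists>g. foldr (opEW la) e (diagW la f t) = diagW la g (foldr (opEW la) e t)"
proof (induct e arbitrary: f)
  case (Cons i e)
  then obtain g where "foldr (opEW la) e (diagW la f t) = diagW la g (foldr (opEW la) e t)" by blast
  hence "foldr (opEW la) (i # e) (diagW la f t) =
      diagW la (\<lambda>mu. g (\<lambda>j. mu j - root i j)) (foldr (opEW la) (i # e) t)"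
    by (simp add: opEW_diagW)
  thus ?case by blast
qed auto

lemma radical_diagW:
  assumes "t \<in> radical la"
  shows "diagW la f t \<in> radical la"
proof -
  have "foldr (opEW la) e (diagW la f t) [] = 0" for e
    using foldr_opEW_diagW[of la e f t] assms by (auto simp: radical_def)
  thus ?thesis by (simp add: radical_def)
qed

text \<open>Commuting the last letter of an E-word past \<open>F\<^sub>k\<close> leaves a shorter E-word applied to
  \<open>F\<^sub>k t\<close> plus a diagonal term, which is handled by induction.\<close>
lemma radical_opFW: "t \<in> radical la \<Longrightarrow> opFW k t \<in> radical la"
proof -
  have "\<forall>t \<in> radical la. foldr (opEW la) e (opFW k t) [] = 0" for e
  proof (induct e rule: rev_induct)
    case (snoc i e)
    show ?case
    proof
      fix t assume t: "t \<in> radical la"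
      have "foldr (opEW la) (e @ [i]) (opFW k t) = foldr (opEW la) e (opFW k (opEW la i t)) +
          foldr (opEW la) e (if i = k then diagW la (\<lambda>mu. ef_scalar mu i) t else 0)"
        by (simp add: opEW_opFW foldr_opEW_linear_simps)
      moreover have "foldr (opEW la) e (opFW k (opEW la i t)) [] = 0"
        using snoc radical_opEW[OF t] by blast
      moreover have "(if i = k then diagW la (\<lambda>mu. ef_scalar mu i) t else 0) \<in> radical la"
        using radical_diagW[OF t] radical_zero by simp
      ultimately show "foldr (opEW la) (e @ [i]) (opFW k t) [] = 0"
        by (simp add: radical_def)
    qed
  qed simp
  thus "t \<in> radical la \<Longrightarrow> opFW k t \<in> radical la" by (simp add: radical_def)
qed

lemma commutes_opEW_radical:
  assumes comm: "\<And>k s. opEW la k (X s) = X (opEW la k s)" and Nil: "\<And>s. X s [] = 0"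
  shows "X t \<in> radical la"
proof -
  have "foldr (opEW la) e (X t) = X (foldr (opEW la) e t)" for e
    by (induct e) (simp_all add: comm)
  thus ?thesis by (simp add: radical_def Nil)
qed

lemma radical_serreF: "\<bar>i - j\<bar> = 1 \<Longrightarrow> serreF i j t \<in> radical la"
  by (rule commutes_opEW_radical[OF opEW_serreF]) (simp_all add: serreF_def)

lemma radical_commF: "\<bar>i - j\<bar> > 1 \<Longrightarrow> commF i j t \<in> radical la"
  by (rule commutes_opEW_radical[OF opEW_commF]) (simp_all add: commF_def)

lemma radical_highest:
  assumes "\<And>i. opEW la i s \<in> radical la"
  shows "s - fscale (s []) (word_vec []) \<in> radical la"
  unfolding radical_def
proof (intro CollectI allI)
  fix e show "foldr (opEW la) e (s - fscale (s []) (word_vec [])) [] = 0"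
  proof (cases e rule: rev_cases)
    case (snoc e' i)
    hence "foldr (opEW la) e (s - fscale (s []) (word_vec [])) = foldr (opEW la) e' (opEW la i s)"
      by (simp add: opW_linear_simps opEW_word_vec_Nil)
    thus ?thesis using assms[of i] by (simp add: radical_def)
  qed (simp add: word_vec_def)
qed

lemma foldr_opEW_vanish:
  assumes "\<And>u. n \<le> length u \<Longrightarrow> t u = 0" and "n \<le> length e + length u"
  shows "foldr (opEW la) e t u = 0"
  using assms(2)
proof (induct e arbitrary: u)
  case (Cons i e)
  have "foldr (opEW la) e t (take p u @ i # drop p u) = 0" if "p \<le> length u" for p
    using Cons that by simp
  thus ?case unfolding foldr.simps o_apply opEW_def by (intro sum.neutral) simp
qed (simp add: assms(1))

lemma fin_supp_foldr_opEW_eventually_zero: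
  assumes "t \<in> fin_supp"
  obtains n where "\<And>e. n \<le> length e \<Longrightarrow> foldr (opEW la) e t = 0"
proof -
  define n where "n = Suc (Max (insert 0 (length ` {u. t u \<noteq> 0})))"
  have vanish: "t u = 0" if long: "n \<le> length u" for u
  proof (rule ccontr)
    assume "t u \<noteq> 0"
    hence "length u \<le> Max (insert 0 (length ` {u. t u \<noteq> 0}))"
      using assms by (intro Max_ge) (auto simp: fin_supp_def)
    thus False using long by (simp add: n_def)
  qed
  have "foldr (opEW la) e t u = 0" if long: "n \<le> length e" for e u
    by (rule foldr_opEW_vanish[of n]) (use vanish long in auto)
  thus ?thesis by (intro that[of n]) (simp add: fun_eq_iff)
qed

text \<open>From a vector outside the radical, a maximal sequence of \<open>E\<^sub>i\<close>'s staying outside the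
  radical ends, modulo the radical, at a nonzero multiple of the highest weight vector.\<close>
lemma radical_top_vector:
  assumes "t \<in> fin_supp" "t \<notin> radical la"
  obtains e c where "c \<noteq> 0" "foldr (opEW la) e t - fscale c (word_vec []) \<in> radical la"
proof -
  obtain n where n: "\<And>e. n \<le> length e \<Longrightarrow> foldr (opEW la) e t = 0"
    using fin_supp_foldr_opEW_eventually_zero[OF assms(1)] by blast
  have "\<exists>e. foldr (opEW la) e t \<notin> radical la \<and> (\<forall>i. \<not> foldr (opEW la) (i # e) t \<notin> radical la)"
  proof (rule exists_maximal_word)
    show "length e < n" if "foldr (opEW la) e t \<notin> radical la" for e
      using that n[of e] radical_zero by (cases "n \<le> length e") auto
  qed (use assms(2) in simp)
  then obtain e where e: "foldr (opEW la) e t \<notin> radical la"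
    "\<And>i. opEW la i (foldr (opEW la) e t) \<in> radical la" by auto
  let ?s = "foldr (opEW la) e t"
  have rad: "?s - fscale (?s []) (word_vec []) \<in> radical la" using radical_highest e(2) by blast
  with e(1) have "?s [] \<noteq> 0" by auto
  with rad show ?thesis by (rule that[rotated])
qed

section \<open>The module L(\<lambda>)\<close>

text \<open>The class of \<open>t\<close> modulo the radical is recorded by its pairings with all E-words,
  enumerated through \<open>from_nat\<close>; this gives \<open>L(\<lambda>)\<close> a carrier in the fixed type \<open>nat \<Rightarrow> qv\<close>.\<close>
definition Lvec :: "wt \<Rightarrow> wvec \<Rightarrow> nat \<Rightarrow> qv" where
  "Lvec la t = (\<lambda>n. foldr (opEW la) (from_nat n) t [])"

lemma linear_Lvec: "Vector_Spaces.linear fscale fscale (Lvec la)"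
  by (simp add: Vector_Spaces.linear_iff vector_space_fscale Lvec_def fun_eq_iff
      foldr_opEW_linear_simps)

lemmas Lvec_add = fun_pair.linear_add[OF linear_Lvec]
  and Lvec_diff = fun_pair.linear_diff[OF linear_Lvec]
  and Lvec_scale = fun_pair.linear_scale[OF linear_Lvec]
  and Lvec_sum = fun_pair.linear_sum[OF linear_Lvec]
  and Lvec_zero = fun_pair.linear_0[OF linear_Lvec]

lemma Lvec_eq_0_iff: "Lvec la t = 0 \<longleftrightarrow> t \<in> radical la"
proof
  assume "Lvec la t = 0"
  hence "Lvec la t (to_nat e) = 0" for e :: "int list" by simp
  thus "t \<in> radical la" by (simp add: Lvec_def radical_def)
qed (simp add: Lvec_def radical_def fun_eq_iff)

lemma Lvec_eq_iff: "Lvec la t = Lvec la s \<longleftrightarrow> t - s \<in> radical la"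
  by (simp flip: Lvec_eq_0_iff add: Lvec_diff)

lemma Lvec_word_vec_Nil_nonzero: "Lvec la (word_vec []) \<noteq> 0"
proof -
  have "foldr (opEW la) [] (word_vec []) [] \<noteq> 0" by (simp add: word_vec_def)
  thus ?thesis unfolding Lvec_eq_0_iff radical_def by blast
qed

definition radical_compatible :: "wt \<Rightarrow> (wvec \<Rightarrow> wvec) \<Rightarrow> bool" where
  "radical_compatible la X \<longleftrightarrow> Vector_Spaces.linear fscale fscale X \<and>
     X ` fin_supp \<subseteq> fin_supp \<and> X ` radical la \<subseteq> radical la"

lemma radical_compatible_opEW: "radical_compatible la (opEW la i)"
  and radical_compatible_opFW: "radical_compatible la (opFW i)"
  and radical_compatible_diagW: "radical_compatible la (diagW la f)"
  by (auto simp: radical_compatible_def linear_opEW linear_opFW linear_diagW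
      fin_supp_opEW fin_supp_opFW fin_supp_diagW radical_opEW radical_opFW radical_diagW)

lemmas radical_compatible_opKW = radical_compatible_diagW[of la "\<lambda>mu. vq powi mu i" for la i, folded opKW_def]
  and radical_compatible_opKiW = radical_compatible_diagW[of la "\<lambda>mu. vq powi (- mu i)" for la i, folded opKiW_def]

definition Lop :: "wt \<Rightarrow> (wvec \<Rightarrow> wvec) \<Rightarrow> (nat \<Rightarrow> qv) \<Rightarrow> nat \<Rightarrow> qv" where
  "Lop la X y = Lvec la (X (inv_into fin_supp (Lvec la) y))"

lemma Lop_Lvec:
  assumes X: "radical_compatible la X" and t: "t \<in> fin_supp"
  shows "Lop la X (Lvec la t) = Lvec la (X t)"
proof -
  let ?s = "inv_into fin_supp (Lvec la) (Lvec la t)"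
  have "Lvec la ?s = Lvec la t" using t by (simp add: f_inv_into_f)
  hence "X (?s - t) \<in> radical la" using X by (auto simp: Lvec_eq_iff radical_compatible_def)
  thus ?thesis
    using X fun_pair.linear_diff[of X] by (simp add: Lop_def Lvec_eq_iff radical_compatible_def)
qed

definition Lmod :: "wt \<Rightarrow> (nat \<Rightarrow> qv) umod" where
  "Lmod la = \<lparr>carr = Lvec la ` fin_supp, smult = fscale,
     opE = (\<lambda>i. Lop la (opEW la i)), opF = (\<lambda>i. Lop la (opFW i)),
     opK = (\<lambda>i. Lop la (opKW la i)), opKi = (\<lambda>i. Lop la (opKiW la i))\<rparr>"

lemma Lmod_simps [simp]:
  "carr (Lmod la) = Lvec la ` fin_supp" "smult (Lmod la) = fscale"
  "opE (Lmod la) = (\<lambda>i. Lop la (opEW la i))" "opF (Lmod la) = (\<lambda>i. Lop la (opFW i))"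
  "opK (Lmod la) = (\<lambda>i. Lop la (opKW la i))" "opKi (Lmod la) = (\<lambda>i. Lop la (opKiW la i))"
  by (simp_all add: Lmod_def)

lemma lin_on_Lop:
  assumes X: "radical_compatible la X"
  shows "lin_on (Lmod la) (Lop la X)"
proof -
  have l: "Vector_Spaces.linear fscale fscale X" and fs: "\<And>t. t \<in> fin_supp \<Longrightarrow> X t \<in> fin_supp"
    using X by (auto simp: radical_compatible_def)
  have "Lop la X (Lvec la t + Lvec la s) = Lop la X (Lvec la t) + Lop la X (Lvec la s)"
    if "t \<in> fin_supp" "s \<in> fin_supp" for t s
    using that X by (simp flip: Lvec_add add: Lop_Lvec fin_supp_add fun_pair.linear_add[OF l])
  moreover have "Lop la X (fscale c (Lvec la t)) = fscale c (Lop la X (Lvec la t))"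
    if "t \<in> fin_supp" for c t
    using that X by (simp flip: Lvec_scale add: Lop_Lvec fin_supp_scale fun_pair.linear_scale[OF l])
  ultimately show ?thesis
    using X fs by (auto simp: lin_on_def Lop_Lvec)
qed

lemma opKW_commute: "opKW la i (opKW la j t) = opKW la j (opKW la i t)"
  by (rule ext) (simp add: opKW_def)

lemma Lmod_relations:
  fixes la :: wt and t :: wvec
  assumes t: "t \<in> fin_supp"
  defines "x \<equiv> Lvec la t"
    and "E \<equiv> \<lambda>i. Lop la (opEW la i)" and "F \<equiv> \<lambda>i. Lop la (opFW i)"
    and "K \<equiv> \<lambda>i. Lop la (opKW la i)" and "Ki \<equiv> \<lambda>i. Lop la (opKiW la i)"
  shows
    "K i (K j x) = K j (K i x)"
    "K i (Ki i x) = x" "Ki i (K i x) = x"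
    "K i (E j x) = fscale (vq powi (dlt i j - dlt i (j + 1))) (E j (K i x))"
    "K i (F j x) = fscale (vq powi (dlt i (j + 1) - dlt i j)) (F j (K i x))"
    "\<bar>i - j\<bar> > 1 \<Longrightarrow> E i (E j x) = E j (E i x)"
    "\<bar>i - j\<bar> > 1 \<Longrightarrow> F i (F j x) = F j (F i x)"
    "E i (F j x) - F j (E i x) = (if i = j then fscale (inverse (vq - inverse vq))
       (K i (Ki (i + 1) x) - K (i + 1) (Ki i x)) else 0)"
    "\<bar>i - j\<bar> = 1 \<Longrightarrow> E i (E i (E j x)) - fscale (vq + inverse vq) (E i (E j (E i x))) + E j (E i (E i x)) = 0"
    "\<bar>i - j\<bar> = 1 \<Longrightarrow> F i (F i (F j x)) - fscale (vq + inverse vq) (F i (F j (F i x))) + F j (F i (F i x)) = 0"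
proof -
  note fs = fin_supp_opEW fin_supp_opFW fin_supp_opKW fin_supp_opKiW
  note push = Lop_Lvec[OF radical_compatible_opEW] Lop_Lvec[OF radical_compatible_opFW]
    Lop_Lvec[OF radical_compatible_opKW] Lop_Lvec[OF radical_compatible_opKiW]
  note L = push fs t
  show "K i (K j x) = K j (K i x)" unfolding x_def K_def by (simp add: L opKW_commute)
  show "K i (Ki i x) = x" "Ki i (K i x) = x" unfolding x_def K_def Ki_def by (simp_all add: L opKW_opKiW)
  show "K i (E j x) = fscale (vq powi (dlt i j - dlt i (j + 1))) (E j (K i x))"
    unfolding x_def K_def E_def by (simp add: L opKW_opEW Lvec_scale)
  show "K i (F j x) = fscale (vq powi (dlt i (j + 1) - dlt i j)) (F j (K i x))"
    unfolding x_def K_def F_def by (simp add: L opKW_opFW Lvec_scale)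
  show "\<bar>i - j\<bar> > 1 \<Longrightarrow> E i (E j x) = E j (E i x)"
    using commE_fin_supp[where la=la and i=i and j=j, OF _ t] unfolding x_def E_def by (simp add: L commE_def)
  show "\<bar>i - j\<bar> > 1 \<Longrightarrow> F i (F j x) = F j (F i x)"
    using radical_commF[where la=la and t=t and i=i and j=j] unfolding x_def F_def by (simp add: L Lvec_eq_iff commF_def)
  show "E i (F j x) - F j (E i x) = (if i = j then fscale (inverse (vq - inverse vq))
      (K i (Ki (i + 1) x) - K (i + 1) (Ki i x)) else 0)"
    unfolding x_def E_def F_def K_def Ki_def
    using arg_cong[OF opEW_opFW_commutator[where la=la and i=i and j=j and t=t], of "Lvec la"]
    by (simp add: L Lvec_diff Lvec_scale Lvec_zero)
  show "E i (E i (E j x)) - fscale (vq + inverse vq) (E i (E j (E i x))) + E j (E i (E i x)) = 0"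
    if ij: "\<bar>i - j\<bar> = 1"
  proof -
    have "Lvec la (serreE la i j t) = 0" using serreE_fin_supp[OF ij t] Lvec_zero by simp
    thus ?thesis unfolding x_def E_def by (simp add: L serreE_def Lvec_add Lvec_diff Lvec_scale)
  qed
  show "F i (F i (F j x)) - fscale (vq + inverse vq) (F i (F j (F i x))) + F j (F i (F i x)) = 0"
    if ij: "\<bar>i - j\<bar> = 1"
  proof -
    have "Lvec la (serreF i j t) = 0" using radical_serreF[OF ij] Lvec_eq_0_iff by blast
    thus ?thesis unfolding x_def F_def by (simp add: L serreF_def Lvec_add Lvec_diff Lvec_scale)
  qed
qed

lemma is_Umod_Lmod: "is_Umod (Lmod la)"
proof -
  have "vector_space (smult (Lmod la))" by (simp add: vector_space_fscale)
  moreover have "fun_vs.subspace (Lvec la ` fin_supp)"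
    by (rule fun_pair.linear_subspace_image[OF linear_Lvec fin_supp_subspace])
  moreover have "lin_on (Lmod la) (opE (Lmod la) i) \<and> lin_on (Lmod la) (opF (Lmod la) i) \<and>
      lin_on (Lmod la) (opK (Lmod la) i) \<and> lin_on (Lmod la) (opKi (Lmod la) i)" for i
    by (simp add: lin_on_Lop radical_compatible_opEW radical_compatible_opFW
        radical_compatible_opKW radical_compatible_opKiW)
  ultimately show ?thesis
    unfolding is_Umod_def by (auto simp: Lmod_relations)
qed

lemma umodule_Lmod: "umodule (Lmod la)"
  by (rule umodule.intro[OF is_Umod_Lmod])

lemma Lmod_submod_contains_top:
  assumes W: "is_submod (Lmod la) W" and nz: "W \<noteq> {0}"
  shows "Lvec la (word_vec []) \<in> W"
proof -
  interpret umodule "Lmod la" by (rule umodule_Lmod)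
  have Wsp: "vs.subspace W" and WE: "\<And>i x. x \<in> W \<Longrightarrow> Lop la (opEW la i) x \<in> W"
    using W by (auto simp: is_submod_def)
  obtain x where x: "x \<in> W" "x \<noteq> 0" using nz vs.subspace_0[OF Wsp] by blast
  then obtain t where t: "t \<in> fin_supp" "x = Lvec la t" using W by (auto simp: is_submod_def)
  hence "t \<notin> radical la" using x(2) Lvec_eq_0_iff by blast
  then obtain e c where ec: "c \<noteq> 0" "foldr (opEW la) e t - fscale c (word_vec []) \<in> radical la"
    using radical_top_vector[OF t(1)] by blast
  have "Lvec la (foldr (opEW la) e' t) \<in> W" for e'
  proof (induct e')
    case (Cons i e')
    have "Lvec la (foldr (opEW la) (i # e') t) = Lop la (opEW la i) (Lvec la (foldr (opEW la) e' t))"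
      by (simp add: Lop_Lvec[OF radical_compatible_opEW fin_supp_foldr_opEW[OF t(1)]])
    thus ?case using WE Cons by simp
  qed (use x t in simp)
  moreover have "Lvec la (foldr (opEW la) e t) = fscale c (Lvec la (word_vec []))"
    using ec(2) by (simp add: Lvec_eq_iff Lvec_scale[symmetric])
  ultimately have "fscale (inverse c) (fscale c (Lvec la (word_vec []))) \<in> W"
    using Wsp vs.subspace_scale by (metis Lmod_simps(2))
  thus ?thesis using ec(1) by simp
qed

lemma Lmod_submod_generated_by_top:
  assumes W: "is_submod (Lmod la) W" and top: "Lvec la (word_vec []) \<in> W"
  shows "W = carr (Lmod la)"
proof -
  interpret umodule "Lmod la" by (rule umodule_Lmod)
  have Wsp: "vs.subspace W" and WF: "\<And>i x. x \<in> W \<Longrightarrow> Lop la (opFW i) x \<in> W"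
    using W by (auto simp: is_submod_def)
  have words: "Lvec la (word_vec w) \<in> W" for w
  proof (induct w)
    case (Cons k w)
    have "Lvec la (word_vec (k # w)) = Lop la (opFW k) (Lvec la (word_vec w))"
      by (simp add: Lop_Lvec[OF radical_compatible_opFW word_vec_fin_supp] opFW_word_vec)
    thus ?case using WF Cons by simp
  qed (rule top)
  have "Lvec la t \<in> W" if "t \<in> fin_supp" for t
  proof -
    have "t = (\<Sum>w\<in>{u. t u \<noteq> 0}. fscale (t w) (word_vec w))"
      using that by (intro word_vec_expansion) (simp_all add: fin_supp_def)
    hence "Lvec la t = Lvec la (\<Sum>w\<in>{u. t u \<noteq> 0}. fscale (t w) (word_vec w))" by (rule arg_cong)
    also have "\<dots> = (\<Sum>w\<in>{u. t u \<noteq> 0}. fscale (t w) (Lvec la (word_vec w)))"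
      by (simp add: Lvec_sum Lvec_scale)
    finally show ?thesis
      using Wsp words by (simp add: fun_vs.subspace_sum fun_vs.subspace_scale)
  qed
  thus ?thesis using W by (auto simp: is_submod_def)
qed

lemma irreducible_Lmod: "irreducible_mod (Lmod la)"
  unfolding irreducible_mod_def
  using is_Umod_Lmod Lvec_word_vec_Nil_nonzero word_vec_fin_supp
    Lmod_submod_contains_top Lmod_submod_generated_by_top
  by fastforce

lemma is_L_Lmod: "is_L la (Lmod la)"
proof -
  have "Lop la (opKW la i) (Lvec la (word_vec [])) = fscale (vq powi la i) (Lvec la (word_vec []))" for i
    using Lop_Lvec[OF radical_compatible_opKW word_vec_fin_supp]
    by (simp add: opKW_def diagW_word_vec Lvec_scale)
  moreover have "Lop la (opEW la i) (Lvec la (word_vec [])) = 0" for i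
    using Lop_Lvec[OF radical_compatible_opEW word_vec_fin_supp] by (simp add: opEW_word_vec_Nil Lvec_zero)
  ultimately show ?thesis
    unfolding is_L_def using word_vec_fin_supp
    by (intro conjI irreducible_Lmod bexI[of _ "Lvec la (word_vec [])"] Lvec_word_vec_Nil_nonzero) auto
qed

section \<open>Modules generated by a highest weight vector\<close>

locale hw_vector = umodule +
  fixes la :: wt and m
  assumes m_carr: "m \<in> carr M"
    and opE_m: "\<And>i. opE M i m = 0"
    and opK_m: "\<And>i. opK M i m = smult M (vq powi la i) m"
begin

definition Fword :: "int list \<Rightarrow> 'a" where
  "Fword w = foldr (opF M) w m"

definition word_map :: "wvec \<Rightarrow> 'a" where
  "word_map t = (\<Sum>w\<in>{u. t u \<noteq> 0}. smult M (t w) (Fword w))"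

lemma Fword_Nil: "Fword [] = m"
  and Fword_Cons: "Fword (k # w) = opF M k (Fword w)"
  by (simp_all add: Fword_def)

lemma Fword_wspace: "Fword w \<in> wspace M (word_wt la w)"
proof (induct w)
  case Nil thus ?case using m_carr opK_m by (simp add: wspace_def Fword_Nil)
next
  case (Cons k w) thus ?case using opF_wspace[OF Cons] by (simp add: Fword_Cons word_wt_Cons)
qed

lemma Fword_carr: "Fword w \<in> carr M"
  using Fword_wspace by (rule wspace_carr)

lemma word_map_eq_sum:
  assumes "finite S" "{u. t u \<noteq> 0} \<subseteq> S"
  shows "word_map t = (\<Sum>w\<in>S. smult M (t w) (Fword w))"
  unfolding word_map_def by (rule sum.mono_neutral_left) (use assms in auto)

lemma word_map_carr: "word_map t \<in> carr M"
  unfolding word_map_def by (intro carr_sum carr_scale Fword_carr)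

lemma word_map_add:
  assumes "t \<in> fin_supp" "s \<in> fin_supp"
  shows "word_map (t + s) = word_map t + word_map s"
proof -
  let ?S = "{u. t u \<noteq> 0} \<union> {u. s u \<noteq> 0}"
  have f: "finite ?S" using assms by (simp add: fin_supp_def)
  have "word_map (t + s) = (\<Sum>w\<in>?S. smult M ((t + s) w) (Fword w))"
    by (rule word_map_eq_sum[OF f]) auto
  also have "\<dots> = (\<Sum>w\<in>?S. smult M (t w) (Fword w)) + (\<Sum>w\<in>?S. smult M (s w) (Fword w))"
    by (simp add: vs.scale_left_distrib sum.distrib)
  also have "\<dots> = word_map t + word_map s"
    using word_map_eq_sum[OF f, of t] word_map_eq_sum[OF f, of s] by auto
  finally show ?thesis .
qed

lemma word_map_scale:
  assumes "t \<in> fin_supp"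
  shows "word_map (fscale c t) = smult M c (word_map t)"
proof -
  have "word_map (fscale c t) = (\<Sum>w\<in>{u. t u \<noteq> 0}. smult M (fscale c t w) (Fword w))"
    using assms by (intro word_map_eq_sum) (auto simp: fin_supp_def)
  thus ?thesis by (simp add: word_map_def vs.scale_sum_right)
qed

lemma word_map_zero: "word_map 0 = 0"
  by (simp add: word_map_def)

lemma word_map_diff:
  assumes "t \<in> fin_supp" "s \<in> fin_supp"
  shows "word_map (t - s) = word_map t - word_map s"
  using word_map_add[OF fin_supp_diff[OF assms] assms(2)] by (simp add: eq_diff_eq)

lemma word_map_word_vec: "word_map (word_vec w) = Fword w"
  using word_map_eq_sum[of "{w}" "word_vec w"] by (simp add: word_vec_def)

lemma word_map_intertwines:
  assumes X: "Vector_Spaces.linear fscale fscale X" "\<And>t. t \<in> fin_supp \<Longrightarrow> X t \<in> fin_supp"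
    and op: "lin_on M op" and basis: "\<And>w. word_map (X (word_vec w)) = op (Fword w)"
    and t: "t \<in> fin_supp"
  shows "word_map (X t) = op (word_map t)"
proof -
  let ?P = "{t \<in> fin_supp. word_map (X t) = op (word_map t)}"
  have "fun_vs.subspace ?P"
  proof (rule fun_vs.subspaceI)
    show "0 \<in> ?P"
      using fin_supp_zero lin_on_zero[OF op] by (simp add: fun_pair.linear_0[OF X(1)] word_map_zero)
    show "t + s \<in> ?P" if "t \<in> ?P" "s \<in> ?P" for t s
      using that X by (simp add: fin_supp_add fun_pair.linear_add[OF X(1)] word_map_add
          lin_on_add[OF op] word_map_carr)
    show "fscale c t \<in> ?P" if "t \<in> ?P" for c t
      using that X by (simp add: fin_supp_scale fun_pair.linear_scale[OF X(1)] word_map_scale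
          lin_on_scale[OF op] word_map_carr)
  qed
  moreover have "word_vec w \<in> ?P" for w by (simp add: word_vec_fin_supp basis word_map_word_vec)
  ultimately show ?thesis
    using fun_vs.span_induct[OF fin_supp_in_span[OF t], of "\<lambda>t. t \<in> ?P"] by auto
qed

lemma word_map_opFW:
  assumes t: "t \<in> fin_supp"
  shows "word_map (opFW k t) = opF M k (word_map t)"
  by (rule word_map_intertwines[OF linear_opFW _ lin_on_ops(2) _ t])
    (simp_all add: fin_supp_opFW opFW_word_vec word_map_word_vec Fword_Cons)

lemma word_map_opKW:
  assumes t: "t \<in> fin_supp"
  shows "word_map (opKW la i t) = opK M i (word_map t)"
  by (rule word_map_intertwines[OF linear_opKW _ lin_on_ops(3) _ t])
    (simp_all add: fin_supp_diagW opKW_def diagW_word_vec word_map_scale word_vec_fin_supp word_map_word_vec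
      opK_wspace[OF Fword_wspace])

lemma word_map_opKiW:
  assumes t: "t \<in> fin_supp"
  shows "word_map (opKiW la i t) = opKi M i (word_map t)"
  by (rule word_map_intertwines[OF linear_opKiW _ lin_on_ops(4) _ t])
    (simp_all add: fin_supp_diagW opKiW_def diagW_word_vec word_map_scale word_vec_fin_supp word_map_word_vec
      opKi_wspace[OF Fword_wspace])

lemma word_map_opEW_word_vec: "word_map (opEW la i (word_vec w)) = opE M i (Fword w)"
proof (induct w)
  case Nil thus ?case by (simp only: opEW_word_vec_Nil word_map_zero Fword_Nil opE_m)
next
  case (Cons k w)
  have "opEW la i (word_vec (k # w)) =
      opFW k (opEW la i (word_vec w)) + (if i = k then fscale (ef_scalar (word_wt la w) i) (word_vec w) else 0)"
    by (simp add: opFW_word_vec[symmetric] opEW_opFW diagW_word_vec)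
  hence "word_map (opEW la i (word_vec (k # w))) =
      opF M k (opE M i (Fword w)) + (if i = k then smult M (ef_scalar (word_wt la w) i) (Fword w) else 0)"
    using Cons by (simp add: word_map_add fin_supp_opFW fin_supp_opEW fin_supp_scale word_vec_fin_supp
        fin_supp_zero word_map_opFW word_map_scale word_map_word_vec word_map_zero)
  thus ?case by (simp add: Fword_Cons opE_opF_wspace[OF Fword_wspace])
qed

lemma word_map_opEW:
  assumes t: "t \<in> fin_supp"
  shows "word_map (opEW la i t) = opE M i (word_map t)"
  by (rule word_map_intertwines[OF linear_opEW _ lin_on_ops(1) word_map_opEW_word_vec t])
    (rule fin_supp_opEW)

lemma word_map_foldr_opEW: "t \<in> fin_supp \<Longrightarrow> word_map (foldr (opEW la) e t) = foldr (opE M) e (word_map t)"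
  by (induct e) (simp_all add: word_map_opEW fin_supp_foldr_opEW)

definition wt_part :: "wvec \<Rightarrow> wt \<Rightarrow> 'a" where
  "wt_part t nu = (\<Sum>w\<in>{w \<in> {u. t u \<noteq> 0}. word_wt la w = nu}. smult M (t w) (Fword w))"

lemma word_map_wt_decomp:
  assumes "t \<in> fin_supp"
  shows "word_map t = (\<Sum>nu\<in>word_wt la ` {u. t u \<noteq> 0}. wt_part t nu)"
  unfolding word_map_def wt_part_def
  using assms by (intro sum.image_gen) (simp add: fin_supp_def)

lemma wt_part_wspace: "wt_part t nu \<in> wspace M nu"
  unfolding wt_part_def
  using Fword_wspace by (intro vs.subspace_sum[OF wspace_subspace] vs.subspace_scale[OF wspace_subspace]) auto

lemma wt_part_in_span: "wt_part t nu \<in> vs.span (Fword ` {w. word_wt la w = nu})"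
  unfolding wt_part_def by (intro vs.span_sum vs.span_scale vs.span_base) auto

lemma wt_part_highest: "wt_part t la = smult M (t []) m"
proof (cases "t [] = 0")
  case True
  hence S: "{w \<in> {u. t u \<noteq> 0}. word_wt la w = la} = {}" by (auto simp: word_wt_eq_self_iff)
  show ?thesis unfolding wt_part_def S using True by simp
next
  case False
  hence S: "{w \<in> {u. t u \<noteq> 0}. word_wt la w = la} = {[]}" by (auto simp: word_wt_eq_self_iff)
  show ?thesis unfolding wt_part_def S by (simp add: Fword_Nil)
qed

text \<open>By independence of weight spaces, a weight vector in the image is its own component.\<close>
lemma word_map_wspace:
  assumes t: "t \<in> fin_supp" and x: "word_map t \<in> wspace M nu"
  shows "word_map t = wt_part t nu"
proof -
  let ?A = "insert nu (word_wt la ` {u. t u \<noteq> 0})"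
  define g where "g mu = wt_part t mu - (if mu = nu then word_map t else 0)" for mu
  have fA: "finite ?A" using t by (simp add: fin_supp_def)
  have gw: "g mu \<in> wspace M mu" if "mu \<in> ?A" for mu
    using wt_part_wspace x wspace_subspace vs.subspace_diff vs.subspace_0 by (auto simp: g_def)
  have "(\<Sum>mu\<in>?A. wt_part t mu) = (\<Sum>mu\<in>word_wt la ` {u. t u \<noteq> 0}. wt_part t mu)"
    using fA by (intro sum.mono_neutral_right) (auto simp: wt_part_def intro!: sum.neutral)
  hence "(\<Sum>mu\<in>?A. g mu) = 0"
    using fA word_map_wt_decomp[OF t] by (simp add: g_def sum_subtractf sum.delta)
  hence "g nu = 0" using wspace_independent[OF fA gw] by simp
  thus ?thesis by (simp add: g_def)
qed

end

locale irreducible_hw = hw_vector +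
  assumes irreducible: "irreducible_mod M" and m_nonzero: "m \<noteq> 0"
begin

lemma word_map_image_cases:
  assumes S: "S \<subseteq> fin_supp" "fun_vs.subspace S"
    and closed: "\<And>t i. t \<in> S \<Longrightarrow> opEW la i t \<in> S" "\<And>t i. t \<in> S \<Longrightarrow> opFW i t \<in> S"
      "\<And>t i. t \<in> S \<Longrightarrow> opKW la i t \<in> S" "\<And>t i. t \<in> S \<Longrightarrow> opKiW la i t \<in> S"
  shows "word_map ` S = {0} \<or> word_map ` S = carr M"
proof -
  have "vs.subspace (word_map ` S)"
  proof (rule vs.subspaceI)
    show "0 \<in> word_map ` S" using fun_vs.subspace_0[OF S(2)] word_map_zero by force
    show "x + y \<in> word_map ` S" if xy: "x \<in> word_map ` S" "y \<in> word_map ` S" for x y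
    proof -
      obtain t s where ts: "t \<in> S" "s \<in> S" "x = word_map t" "y = word_map s" using xy by blast
      moreover have "t \<in> fin_supp" "s \<in> fin_supp" using ts S(1) by blast+
      ultimately have "x + y = word_map (t + s)" by (simp add: word_map_add)
      thus ?thesis using ts fun_vs.subspace_add[OF S(2)] by blast
    qed
    show "smult M c x \<in> word_map ` S" if x: "x \<in> word_map ` S" for c x
    proof -
      obtain t where t: "t \<in> S" "x = word_map t" using x by blast
      moreover have "t \<in> fin_supp" using t S(1) by blast
      ultimately have "smult M c x = word_map (fscale c t)" by (simp add: word_map_scale)
      thus ?thesis using t fun_vs.subspace_scale[OF S(2)] by blast
    qed
  qed
  moreover have "opE M i x \<in> word_map ` S \<and> opF M i x \<in> word_map ` S \<and>
      opK M i x \<in> word_map ` S \<and> opKi M i x \<in> word_map ` S" if x: "x \<in> word_map ` S" for i x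
  proof -
    obtain t where t: "t \<in> S" "x = word_map t" using x by blast
    moreover have "t \<in> fin_supp" using t S(1) by blast
    ultimately have "opE M i x = word_map (opEW la i t)" "opF M i x = word_map (opFW i t)"
      "opK M i x = word_map (opKW la i t)" "opKi M i x = word_map (opKiW la i t)"
      by (simp_all add: word_map_opEW word_map_opFW word_map_opKW word_map_opKiW)
    thus ?thesis using closed t(1) by blast
  qed
  ultimately have "is_submod M (word_map ` S)"
    using word_map_carr by (auto simp: is_submod_def)
  thus ?thesis using irreducible by (simp add: irreducible_mod_def)
qed

lemma word_map_surj: "word_map ` fin_supp = carr M"
proof -
  have "m \<in> word_map ` fin_supp"
    using word_map_word_vec[of "[]"] by (intro image_eqI[OF _ word_vec_fin_supp[of "[]"]]) (simp add: Fword_Nil)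
  moreover have "word_map ` fin_supp = {0} \<or> word_map ` fin_supp = carr M"
    by (rule word_map_image_cases)
      (simp_all add: fin_supp_subspace fin_supp_opEW fin_supp_opFW fin_supp_opKW fin_supp_opKiW)
  ultimately show ?thesis using m_nonzero by auto
qed

text \<open>The image of the radical is a proper submodule, since its weight \<open>\<lambda>\<close> part vanishes;
  by irreducibility it is zero.\<close>
lemma word_map_radical:
  assumes "t \<in> fin_supp" "t \<in> radical la"
  shows "word_map t = 0"
proof -
  let ?S = "fin_supp \<inter> radical la"
  have "word_map ` ?S = {0} \<or> word_map ` ?S = carr M"
    by (rule word_map_image_cases)
      (auto simp: fun_vs.subspace_inter fin_supp_subspace radical_subspace fin_supp_opEW fin_supp_opFW
        fin_supp_diagW radical_opEW radical_opFW opKW_def opKiW_def radical_diagW)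
  moreover have "m \<notin> word_map ` ?S"
  proof
    assume "m \<in> word_map ` ?S"
    then obtain r where r: "r \<in> fin_supp" "r \<in> radical la" "m = word_map r" by blast
    have "foldr (opEW la) [] r [] = 0" using r(2) unfolding radical_def by blast
    hence "r [] = 0" by simp
    moreover have "m = wt_part r la"
      using word_map_wspace[OF r(1)] r(3) m_carr opK_m by (simp add: wspace_def)
    ultimately show False using m_nonzero by (simp add: wt_part_highest)
  qed
  ultimately show ?thesis using m_carr assms by blast
qed

lemma word_map_eq_0_iff:
  assumes t: "t \<in> fin_supp"
  shows "word_map t = 0 \<longleftrightarrow> t \<in> radical la"
proof
  assume t0: "word_map t = 0"
  show "t \<in> radical la"
  proof (rule ccontr)
    assume "t \<notin> radical la"
    then obtain e c where ec: "c \<noteq> 0" "foldr (opEW la) e t - fscale c (word_vec []) \<in> radical la"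
      using radical_top_vector[OF t] by blast
    have fs: "foldr (opEW la) e t - fscale c (word_vec []) \<in> fin_supp"
      by (intro fin_supp_diff fin_supp_foldr_opEW fin_supp_scale word_vec_fin_supp t)
    have "word_map (foldr (opEW la) e t) = 0"
      using t0 by (simp add: word_map_foldr_opEW[OF t] foldr_opE_zero)
    hence "word_map (foldr (opEW la) e t - fscale c (word_vec [])) = - smult M c m"
      by (simp add: word_map_diff fin_supp_foldr_opEW[OF t] fin_supp_scale word_vec_fin_supp
          word_map_scale word_map_word_vec Fword_Nil)
    with word_map_radical[OF fs ec(2)] have "smult M c m = 0" by simp
    thus False using ec(1) m_nonzero by simp
  qed
qed (rule word_map_radical[OF t])

lemma highest_weight_line:
  assumes y: "y \<in> carr M" and E0: "\<And>i. opE M i y = 0"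
  shows "\<exists>c. y = smult M c m"
proof -
  obtain t where t: "t \<in> fin_supp" "y = word_map t" using y word_map_surj by blast
  have "opEW la i t \<in> radical la" for i
    using word_map_eq_0_iff[OF fin_supp_opEW[OF t(1)]] E0 word_map_opEW[OF t(1)] t(2) by simp
  hence "t - fscale (t []) (word_vec []) \<in> radical la" by (rule radical_highest)
  hence "word_map (t - fscale (t []) (word_vec [])) = 0"
    by (intro word_map_radical fin_supp_diff fin_supp_scale word_vec_fin_supp t(1))
  hence "y = smult M (t []) m"
    using t by (simp add: word_map_diff fin_supp_scale word_vec_fin_supp word_map_scale
        word_map_word_vec Fword_Nil)
  thus ?thesis by blast
qed

lemma weight_module: "weight_module M"
  unfolding weight_module_def
proof (intro conjI is_Umod ballI)
  fix x assume "x \<in> carr M"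
  then obtain t where "t \<in> fin_supp" "x = word_map t" using word_map_surj by blast
  thus "\<exists>S f. finite S \<and> (\<forall>\<mu>\<in>S. f \<mu> \<in> wspace M \<mu>) \<and> x = sum f S"
    using word_map_wt_decomp wt_part_wspace
    by (intro exI[of _ "word_wt la ` {u. t u \<noteq> 0}"] exI[of _ "wt_part t"]) (auto simp: fin_supp_def)
qed

lemma in_Chi: "in_Chi M"
  unfolding in_Chi_def
proof (intro conjI weight_module ballI)
  fix x assume "x \<in> carr M"
  then obtain t where t: "t \<in> fin_supp" "x = word_map t" using word_map_surj by blast
  obtain n where n: "\<And>e. n \<le> length e \<Longrightarrow> foldr (opEW la) e t = 0"
    using fin_supp_foldr_opEW_eventually_zero[OF t(1)] by blast
  have "foldr (opE M) e x = 0" if "n \<le> length e" for e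
    using word_map_foldr_opEW[OF t(1), of e] n[OF that] t(2) by (simp add: word_map_zero)
  thus "\<exists>n0. \<forall>w. n0 \<le> length w \<longrightarrow> foldr (opE M) w x = 0" by blast
qed

lemma wspace_in_span:
  assumes x: "x \<in> wspace M nu"
  shows "x \<in> vs.span (Fword ` {w. word_wt la w = nu})"
proof -
  obtain t where t: "t \<in> fin_supp" "x = word_map t" using wspace_carr[OF x] word_map_surj by blast
  hence "x = wt_part t nu" using word_map_wspace[OF t(1)] x by simp
  thus ?thesis using wt_part_in_span by simp
qed

lemma in_O: "in_O M"
  unfolding in_O_def
proof (intro conjI weight_module allI)
  show "\<exists>B. finite B \<and> wspace M nu \<subseteq> vs.span B" for nu
    using wspace_in_span finite_word_wt_fibre
    by (intro exI[of _ "Fword ` {w. word_wt la w = nu}"]) auto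
  have "le_wt mu la" if mu: "mu \<in> wts M" for mu
  proof -
    obtain x where x: "x \<in> wspace M mu" "x \<noteq> 0"
      using mu vs.subspace_0[OF wspace_subspace] unfolding wts_def by blast
    have "Fword ` {w. word_wt la w = mu} \<noteq> {}"
    proof
      assume "Fword ` {w. word_wt la w = mu} = {}"
      thus False using wspace_in_span[OF x(1)] x(2) by simp
    qed
    then obtain w where "word_wt la w = mu" by blast
    thus ?thesis using le_wt_word_wt by blast
  qed
  thus "\<exists>Las. finite Las \<and> wts M \<subseteq> {\<mu>. \<exists>la\<in>Las. le_wt \<mu> la}"
    by (intro exI[of _ "{la}"]) auto
qed

lemma highest_weight_unique:
  assumes y: "y \<in> carr M" "y \<noteq> 0" and E0: "\<And>i. opE M i y = 0"
    and K: "\<And>i. opK M i y = smult M (vq powi mu i) y"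
  shows "mu = la"
proof
  fix i
  obtain c where c: "y = smult M c m" using highest_weight_line[OF y(1) E0] by blast
  have "smult M (vq powi la i) y = smult M (vq powi mu i) y"
    using K[of i] c m_carr opK_m by (simp add: lin_on_scale[OF lin_on_ops(3)] vs.scale_left_commute)
  thus "mu i = la i" using y(2) vs.scale_cancel_right vq_powi_inject by metis
qed

end

lemma is_L_iff_irreducible_hw: "is_L la M \<longleftrightarrow> (\<exists>m. irreducible_hw M la m)"
  by (auto simp: is_L_def irreducible_hw_def irreducible_hw_axioms_def hw_vector_def
      hw_vector_axioms_def umodule_def irreducible_mod_def)

section \<open>Isomorphism classes\<close>

text \<open>Both word maps are onto and have the radical as kernel, so they induce an isomorphism.\<close>
locale irreducible_hw_pair = M: irreducible_hw M la m + N: irreducible_hw N la n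
  for M :: "'b::ab_group_add umod" and N :: "'c::ab_group_add umod" and la m n
begin

definition iso_map :: "'b \<Rightarrow> 'c" where
  "iso_map x = N.word_map (inv_into fin_supp M.word_map x)"

lemma word_map_eq_iff:
  assumes "t \<in> fin_supp" "s \<in> fin_supp"
  shows "M.word_map t = M.word_map s \<longleftrightarrow> N.word_map t = N.word_map s"
  using assms M.word_map_eq_0_iff[OF fin_supp_diff] N.word_map_eq_0_iff[OF fin_supp_diff]
  by (simp add: M.word_map_diff N.word_map_diff)

lemma iso_map_word_map:
  assumes t: "t \<in> fin_supp"
  shows "iso_map (M.word_map t) = N.word_map t"
proof -
  have "inv_into fin_supp M.word_map (M.word_map t) \<in> fin_supp"
    "M.word_map (inv_into fin_supp M.word_map (M.word_map t)) = M.word_map t"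
    using t by (simp_all add: inv_into_into f_inv_into_f)
  thus ?thesis using word_map_eq_iff t by (simp add: iso_map_def)
qed

lemma carr_M_cases:
  assumes "x \<in> carr M"
  obtains t where "t \<in> fin_supp" "x = M.word_map t"
  using assms M.word_map_surj by blast

lemma iso_map_intertwines:
  assumes x: "x \<in> carr M" and X: "\<And>t. t \<in> fin_supp \<Longrightarrow> X t \<in> fin_supp"
    and hM: "\<And>t. t \<in> fin_supp \<Longrightarrow> M.word_map (X t) = opM (M.word_map t)"
    and hN: "\<And>t. t \<in> fin_supp \<Longrightarrow> N.word_map (X t) = opN (N.word_map t)"
  shows "iso_map (opM x) = opN (iso_map x)"
proof -
  obtain t where t: "t \<in> fin_supp" "x = M.word_map t" using x by (rule carr_M_cases)
  hence "iso_map (opM x) = iso_map (M.word_map (X t))" using hM by simp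
  also have "\<dots> = N.word_map (X t)" using iso_map_word_map X t(1) by simp
  also have "\<dots> = opN (iso_map x)" using hN t iso_map_word_map by simp
  finally show ?thesis .
qed

lemma bij_betw_iso_map: "bij_betw iso_map (carr M) (carr N)"
  unfolding bij_betw_def
proof
  show "inj_on iso_map (carr M)"
  proof (rule inj_onI)
    fix x y assume "x \<in> carr M" "y \<in> carr M" "iso_map x = iso_map y"
    moreover obtain t s where "t \<in> fin_supp" "x = M.word_map t" "s \<in> fin_supp" "y = M.word_map s"
      using carr_M_cases \<open>x \<in> carr M\<close> \<open>y \<in> carr M\<close> by metis
    ultimately show "x = y" using iso_map_word_map word_map_eq_iff by simp
  qed
  have "iso_map ` carr M = (\<lambda>t. iso_map (M.word_map t)) ` fin_supp"
    by (simp add: M.word_map_surj[symmetric] image_image)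
  also have "\<dots> = N.word_map ` fin_supp" using iso_map_word_map by (intro image_cong) simp_all
  finally show "iso_map ` carr M = carr N" by (simp add: N.word_map_surj)
qed

lemma iso_map_add:
  assumes "x \<in> carr M" "y \<in> carr M"
  shows "iso_map (x + y) = iso_map x + iso_map y"
proof -
  obtain t s where "t \<in> fin_supp" "x = M.word_map t" "s \<in> fin_supp" "y = M.word_map s"
    using carr_M_cases assms by metis
  thus ?thesis
    using iso_map_word_map by (simp add: fin_supp_add M.word_map_add[symmetric] N.word_map_add)
qed

lemma mod_iso: "mod_iso M N"
proof -
  have "iso_map (smult M c x) = smult N c (iso_map x)" if "x \<in> carr M" for c x
    by (rule iso_map_intertwines[OF that, of "fscale c"])
      (simp_all add: fin_supp_scale M.word_map_scale N.word_map_scale)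
  moreover have "iso_map (opE M i x) = opE N i (iso_map x) \<and> iso_map (opF M i x) = opF N i (iso_map x) \<and>
      iso_map (opK M i x) = opK N i (iso_map x) \<and> iso_map (opKi M i x) = opKi N i (iso_map x)"
    if "x \<in> carr M" for i x
    using iso_map_intertwines[OF that, of "opEW la i"] iso_map_intertwines[OF that, of "opFW i"]
      iso_map_intertwines[OF that, of "opKW la i"] iso_map_intertwines[OF that, of "opKiW la i"]
    by (simp add: fin_supp_opEW fin_supp_opFW fin_supp_opKW fin_supp_opKiW
        M.word_map_opEW N.word_map_opEW M.word_map_opFW N.word_map_opFW
        M.word_map_opKW N.word_map_opKW M.word_map_opKiW N.word_map_opKiW)
  ultimately show ?thesis
    unfolding mod_iso_def using bij_betw_iso_map iso_map_add by blast
qed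

end

lemma mod_iso_reflects_highest_weight_vector:
  assumes iso: "mod_iso M N" and "umodule M" "umodule N"
    and n: "n \<in> carr N" "n \<noteq> 0" "\<And>i. opE N i n = 0" "\<And>i. opK N i n = smult N (vq powi mu i) n"
  obtains y where "y \<in> carr M" "y \<noteq> 0" "\<And>i. opE M i y = 0" "\<And>i. opK M i y = smult M (vq powi mu i) y"
proof -
  interpret M: umodule M by fact
  obtain phi where bij: "bij_betw phi (carr M) (carr N)"
    and add: "\<And>x y. x \<in> carr M \<Longrightarrow> y \<in> carr M \<Longrightarrow> phi (x + y) = phi x + phi y"
    and scale: "\<And>c x. x \<in> carr M \<Longrightarrow> phi (smult M c x) = smult N c (phi x)"
    and ops: "\<And>i x. x \<in> carr M \<Longrightarrow> phi (opE M i x) = opE N i (phi x) \<and> phi (opK M i x) = opK N i (phi x)"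
    using iso unfolding mod_iso_def by blast
  have inj: "inj_on phi (carr M)" using bij by (rule bij_betw_imp_inj_on)
  have phi0: "phi 0 = 0" using add[OF M.carr_zero M.carr_zero] by simp
  have "n \<in> phi ` carr M" using bij n(1) by (simp add: bij_betw_def)
  then obtain y where y: "y \<in> carr M" "phi y = n" by blast
  show ?thesis
  proof (rule that[OF y(1)])
    show "y \<noteq> 0" using y n(2) phi0 by auto
    show "opE M i y = 0" for i
    proof -
      have "phi (opE M i y) = phi 0" using ops[OF y(1)] y(2) n(3) phi0 by simp
      thus ?thesis using inj_onD[OF inj] M.lin_on_carr[OF M.lin_on_ops(1) y(1)] M.carr_zero by blast
    qed
    show "opK M i y = smult M (vq powi mu i) y" for i
    proof -
      have "phi (opK M i y) = phi (smult M (vq powi mu i) y)" using ops[OF y(1)] y(2) n(4) scale[OF y(1)] by simp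
      thus ?thesis
        using inj_onD[OF inj] M.lin_on_carr[OF M.lin_on_ops(3) y(1)] M.carr_scale[OF y(1)] by blast
    qed
  qed
qed

lemma is_L_mod_iso_iff:
  assumes LM: "is_L la M" and LN: "is_L mu N"
  shows "la = mu \<longleftrightarrow> mod_iso M N"
proof -
  obtain m where "irreducible_hw M la m" using LM is_L_iff_irreducible_hw by blast
  then interpret M: irreducible_hw M la m .
  obtain n where "irreducible_hw N mu n" using LN is_L_iff_irreducible_hw by blast
  then interpret N: irreducible_hw N mu n .
  show ?thesis
  proof
    assume "la = mu"
    hence "irreducible_hw_pair M N la m n"
      using M.irreducible_hw_axioms N.irreducible_hw_axioms by (simp add: irreducible_hw_pair_def)
    thus "mod_iso M N" by (rule irreducible_hw_pair.mod_iso)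
  next
    assume iso: "mod_iso M N"
    obtain y where "y \<in> carr M" "y \<noteq> 0" "\<And>i. opE M i y = 0"
        "\<And>i. opK M i y = smult M (vq powi mu i) y"
      by (rule mod_iso_reflects_highest_weight_vector[OF iso M.umodule_axioms N.umodule_axioms
            N.m_carr N.m_nonzero N.opE_m N.opK_m]) blast
    thus "la = mu" using M.highest_weight_unique by auto
  qed
qed

section \<open>Classification\<close>

context umodule
begin

lemma nonzero_weight_vector:
  assumes "carr M \<noteq> {0}" and "weight_module M"
  obtains mu y where "y \<in> wspace M mu" "y \<noteq> 0"
proof -
  obtain x where x: "x \<in> carr M" "x \<noteq> 0" using assms(1) carr_zero by blast
  then obtain S f where Sf: "finite S" "\<forall>mu\<in>S. f mu \<in> wspace M mu" "x = sum f S"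
    using assms(2) unfolding weight_module_def by blast
  then obtain mu where "mu \<in> S" "f mu \<noteq> 0" using x(2) by (metis sum.neutral)
  thus ?thesis using Sf(2) that by blast
qed

text \<open>A longest E-word not killing a weight vector leads to a highest weight vector.\<close>
lemma highest_weight_vector_exists:
  assumes y: "y \<in> wspace M mu" "y \<noteq> 0"
    and nil: "\<And>w. n \<le> length w \<Longrightarrow> foldr (opE M) w y = 0"
  obtains nu z where "z \<in> wspace M nu" "z \<noteq> 0" "\<And>i. opE M i z = 0"
proof -
  have "\<exists>w. foldr (opE M) w y \<noteq> 0 \<and> (\<forall>i. \<not> foldr (opE M) (i # w) y \<noteq> 0)"
  proof (rule exists_maximal_word)
    show "length w < n" if "foldr (opE M) w y \<noteq> 0" for w
      using that nil by (meson not_less)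
  qed (use y in simp)
  then obtain w where "foldr (opE M) w y \<noteq> 0" "\<And>i. opE M i (foldr (opE M) w y) = 0" by auto
  thus ?thesis using foldr_opE_wspace[OF y(1)] that by blast
qed

end

lemma irreducible_highest_weight_is_L:
  assumes "irreducible_mod M" "z \<in> wspace M nu" "z \<noteq> 0" "\<And>i. opE M i z = 0"
  shows "is_L nu M"
  using assms by (auto simp: is_L_def wspace_def)

lemma irreducible_locally_E_nilpotent_is_L:
  assumes irr: "irreducible_mod M" and wm: "weight_module M"
    and nil: "\<And>y mu. y \<in> wspace M mu \<Longrightarrow> \<exists>n. \<forall>w. n \<le> length w \<longrightarrow> foldr (opE M) w y = 0"
  shows "\<exists>nu. is_L nu M"
proof -
  interpret umodule M using irr by (simp add: umodule_def irreducible_mod_def)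
  have "carr M \<noteq> {0}" using irr by (simp add: irreducible_mod_def)
  then obtain mu y where y: "y \<in> wspace M mu" "y \<noteq> 0" using nonzero_weight_vector wm by blast
  obtain n where "\<And>w. n \<le> length w \<Longrightarrow> foldr (opE M) w y = 0" using nil[OF y(1)] by blast
  then obtain nu z where "z \<in> wspace M nu" "z \<noteq> 0" "\<And>i. opE M i z = 0"
    using highest_weight_vector_exists[OF y] by blast
  thus ?thesis using irreducible_highest_weight_is_L[OF irr] by blast
qed

lemma Chi_irreducible_is_L:
  assumes "irreducible_mod M" "in_Chi M"
  shows "\<exists>nu. is_L nu M"
  using assms by (intro irreducible_locally_E_nilpotent_is_L) (auto simp: in_Chi_def wspace_def)

definition wt_coeffs :: "wt \<Rightarrow> wt \<Rightarrow> (int \<Rightarrow> nat) \<Rightarrow> bool" where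
  "wt_coeffs mu la c \<longleftrightarrow> finite {i. c i \<noteq> 0} \<and> (\<forall>j. la j - mu j = int (c j) - int (c (j - 1)))"

lemma le_wt_iff_wt_coeffs: "le_wt mu la \<longleftrightarrow> (\<exists>c. wt_coeffs mu la c)"
  by (simp add: le_wt_def wt_coeffs_def)

lemma shift_invariant_const:
  fixes e :: "int \<Rightarrow> 'a"
  assumes "\<And>j. e j = e (j - 1)"
  shows "e j = e k"
proof -
  have up: "e (k + int n) = e k" for n
    by (induct n) (simp_all, metis assms add.commute add_diff_cancel_left' of_nat_Suc add.assoc)
  have down: "e (k - int n) = e k" for n
    by (induct n) (simp_all, metis assms diff_diff_eq of_nat_Suc add.commute)
  show ?thesis using up[of "nat (j - k)"] down[of "nat (k - j)"] by (cases "j \<ge> k") simp_all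
qed

text \<open>The coefficients of \<open>\<lambda> - \<mu>\<close> in the simple roots are unique: the difference of two
  choices is invariant under shifts and vanishes somewhere.\<close>
lemma wt_coeffs_unique:
  assumes c1: "wt_coeffs mu la c1" and c2: "wt_coeffs mu la c2"
  shows "c1 = c2"
proof -
  define e where "e j = int (c1 j) - int (c2 j)" for j
  have shift: "e j = e (j - 1)" for j
  proof -
    have "la j - mu j = int (c1 j) - int (c1 (j - 1))" "la j - mu j = int (c2 j) - int (c2 (j - 1))"
      using c1 c2 by (simp_all add: wt_coeffs_def)
    thus ?thesis by (simp add: e_def)
  qed
  have "finite ({i. c1 i \<noteq> 0} \<union> {i. c2 i \<noteq> 0})" using c1 c2 by (simp add: wt_coeffs_def)
  then obtain k where "k \<notin> {i. c1 i \<noteq> 0} \<union> {i. c2 i \<noteq> 0}"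
    using ex_new_if_finite[OF infinite_UNIV_int] by blast
  hence "e k = 0" by (simp add: e_def)
  hence "e j = 0" for j using shift_invariant_const[of e j k, OF shift] by simp
  thus ?thesis by (auto simp: e_def fun_eq_iff)
qed

text \<open>The height of \<open>\<lambda> - \<mu>\<close>, i.e. its number of simple roots counted with multiplicity.\<close>
definition wt_height :: "wt \<Rightarrow> wt \<Rightarrow> nat" where
  "wt_height mu la = (let c = SOME c. wt_coeffs mu la c in \<Sum>i\<in>{i. c i \<noteq> 0}. c i)"

lemma length_le_wt_height:
  assumes "le_wt (\<lambda>i. mu i + root_sum w i) la"
  shows "length w \<le> wt_height mu la"
proof -
  obtain c where c: "wt_coeffs (\<lambda>i. mu i + root_sum w i) la c"
    using assms le_wt_iff_wt_coeffs by blast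
  define c' where "c' j = c j + count_list w j" for j
  have "{i. c' i \<noteq> 0} \<subseteq> {i. c i \<noteq> 0} \<union> set w" by (auto simp: c'_def count_list_0_iff)
  hence "wt_coeffs mu la c'"
    using c finite_subset by (fastforce simp: wt_coeffs_def c'_def root_sum_count algebra_simps)
  hence C: "(SOME c. wt_coeffs mu la c) = c'" using wt_coeffs_unique someI by metis
  have fin: "finite {i. c' i \<noteq> 0}" using \<open>wt_coeffs mu la c'\<close> by (simp add: wt_coeffs_def)
  have "length w = (\<Sum>a\<in>set w. count_list w a)" by (simp add: sum_count_set)
  also have "\<dots> \<le> (\<Sum>a\<in>set w. c' a)" by (rule sum_mono) (simp add: c'_def)
  also have "\<dots> \<le> (\<Sum>i\<in>{i. c' i \<noteq> 0}. c' i)"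
    using fin by (intro sum_mono2) (auto simp: c'_def dest: count_list_pos)
  finally show ?thesis by (simp add: wt_height_def C)
qed

text \<open>In \<open>\<O>\<close>, raising a weight vector of weight \<open>\<mu>\<close> by a word of length \<open>\<ell>\<close> lands in
  weight \<open>\<mu>\<close> plus \<open>\<ell>\<close> simple roots, which is only possible below one of the finitely many
  bounding weights if \<open>\<ell>\<close> is at most the corresponding height.\<close>
lemma O_locally_E_nilpotent:
  assumes O: "in_O M" and y: "y \<in> wspace M mu"
  shows "\<exists>n. \<forall>w. n \<le> length w \<longrightarrow> foldr (opE M) w y = 0"
proof -
  interpret umodule M using O by (simp add: umodule_def in_O_def weight_module_def)
  obtain Las where Las: "finite Las" "wts M \<subseteq> {\<mu>. \<exists>la\<in>Las. le_wt \<mu> la}"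
    using O unfolding in_O_def by blast
  have "foldr (opE M) w y = 0" if "Suc (\<Sum>la\<in>Las. wt_height mu la) \<le> length w" for w
  proof (rule ccontr)
    assume "foldr (opE M) w y \<noteq> 0"
    hence "(\<lambda>i. mu i + root_sum w i) \<in> wts M"
      using foldr_opE_wspace[OF y] by (auto simp: wts_def)
    then obtain la where "la \<in> Las" "le_wt (\<lambda>i. mu i + root_sum w i) la" using Las(2) by blast
    hence "length w \<le> (\<Sum>la\<in>Las. wt_height mu la)"
      using length_le_wt_height member_le_sum[OF _ _ Las(1)] by (meson order_trans zero_le)
    thus False using that by simp
  qed
  thus ?thesis by blast
qed

lemma O_irreducible_is_L:
  assumes "irreducible_mod M" "in_O M"
  shows "\<exists>nu. is_L nu M"
proof (rule irreducible_locally_E_nilpotent_is_L[OF assms(1)])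
  show "weight_module M" using assms(2) by (simp add: in_O_def)
qed (rule O_locally_E_nilpotent[OF assms(2)])

theorem theorem9p4:
  fixes M :: "'b::ab_group_add umod" and N :: "'c::ab_group_add umod"
    and la \<mu> :: wt
  shows
  \<comment> \<open>well-definedness and injectivity of lambda |-> [L(lambda)]\<close>
  "(is_L la M \<and> is_L \<mu> N \<longrightarrow> (la = \<mu> \<longleftrightarrow> mod_iso M N))
   \<comment> \<open>(1) category C^hi\<close>
   \<and> (\<forall>\<nu>. \<exists>L :: (nat \<Rightarrow> qv) umod. is_L \<nu> L)
   \<and> (is_L la M \<longrightarrow> in_Chi M)
   \<and> (irreducible_mod M \<and> in_Chi M \<longrightarrow> (\<exists>\<nu>. is_L \<nu> M))
   \<comment> \<open>(2) category O\<close>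
   \<and> (is_L la M \<longrightarrow> in_O M)
   \<and> (irreducible_mod M \<and> in_O M \<longrightarrow> (\<exists>\<nu>. is_L \<nu> M))"
proof (intro conjI impI allI)
  show "la = \<mu> \<longleftrightarrow> mod_iso M N" if "is_L la M \<and> is_L \<mu> N"
    using that is_L_mod_iso_iff by blast
  show "\<exists>L :: (nat \<Rightarrow> qv) umod. is_L \<nu> L" for \<nu>
    using is_L_Lmod by blast
  show "in_Chi M" "in_O M" if "is_L la M"
    using that irreducible_hw.in_Chi irreducible_hw.in_O by (metis is_L_iff_irreducible_hw)+
  show "\<exists>\<nu>. is_L \<nu> M" if "irreducible_mod M \<and> in_Chi M"
    using that Chi_irreducible_is_L by blast
  show "\<exists>\<nu>. is_L \<nu> M" if "irreducible_mod M \<and> in_O M"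
    using that O_irreducible_is_L by blast
qed

end
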